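(* Let $\Omega$ be a verification operator for $|\Psi\rangle$ with second largest eigenvalue $\beta$ and spectral gap $\nu=1-\beta$, let $N\ge1$ be an integer, $0<\delta\le1$, and assume $0<\nu\le1$. Then $$F(N,\delta,\Omega)\ge 1-\frac{1-\delta}{N\nu\delta},$$ and this inequality is saturated when $\delta^*\le\delta\le1$, where $\delta^*=\frac{1+N\beta}{N+1}$. If in addition $\nu\ge1/2$, then $$F(N,\delta,\Omega)\ge1-\frac{1}{(N+1)\delta},$$ and this inequality is saturated when $\Omega$ is singular (i.e. has eigenvalue $0$) and $1/(N+1)\le\delta\le\delta^*$.
   Context: Let $\mathcal H$ be a Hilbert space of finite dimension $D\ge2$ and $|\Psi\rangle\in\mathcal H$ a unit vector. A verification operator for $|\Psi\rangle$ is a Hermitian operator $\Omega$ on $\mathcal H$ with $0\le\Omega\le1$, $\Omega|\Psi\rangle=|\Psi\rangle$, whose eigenvalue $1$ is nondegenerate; $\beta$ denotes its second largest eigenvalue. For an integer $N\ge1$ and a density operator $\rho$ on $\mathcal H^{\otimes(N+1)}$ put $p_\rho=\mathrm{tr}[(\Omega^{\otimes N}\otimes 1)\rho]$ and $f_\rho=\mathrm{tr}[(\Omega^{\otimes N}\otimes|\Psi\rangle\langle\Psi|)\rho]$, and $F(N,\delta,\Omega)=\min\{f_\rho/p_\rho:p_\rho\ge\delta\}$ for $0<\delta\le1$, the minimum over permutation-invariant density operators on $\mathcal H^{\otimes(N+1)}$. *)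

theory Defs
  imports "HOL-Analysis.Analysis" "HOL-Combinatorics.Permutations"
begin

text \<open>Hilbert space H = functions 'a => complex, 'a a finite basis type (D = CARD('a)).  The (N+1)-fold tensor power
has orthonormal basis indexed by lists of length N+1 over 'a.\<close>

type_synonym 'b op = "'b \<Rightarrow> 'b \<Rightarrow> complex"

definition mat_vec :: "'b::finite op \<Rightarrow> ('b \<Rightarrow> complex) \<Rightarrow> ('b \<Rightarrow> complex)" where
  "mat_vec A v = (\<lambda>i. \<Sum>j\<in>UNIV. A i j * v j)"

definition unit_vec :: "('b::finite \<Rightarrow> complex) \<Rightarrow> bool" where
  "unit_vec v \<longleftrightarrow> (\<Sum>i\<in>UNIV. (cmod (v i))\<^sup>2) = 1"

definition psd_on :: "'b set \<Rightarrow> 'b op \<Rightarrow> bool" where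
  "psd_on I A \<longleftrightarrow> (\<forall>i\<in>I. \<forall>j\<in>I. A j i = cnj (A i j)) \<and>
     (\<forall>v. 0 \<le> Re (\<Sum>i\<in>I. \<Sum>j\<in>I. cnj (v i) * A i j * v j))"

definition id_op :: "'b op" where
  "id_op = (\<lambda>i j. if i = j then 1 else 0)"

definition proj_op :: "('b \<Rightarrow> complex) \<Rightarrow> 'b op" where
  "proj_op v = (\<lambda>i j. v i * cnj (v j))"

definition is_eigenvalue :: "'b::finite op \<Rightarrow> complex \<Rightarrow> bool" where
  "is_eigenvalue A l \<longleftrightarrow> (\<exists>v. v \<noteq> (\<lambda>_. 0) \<and> mat_vec A v = (\<lambda>i. l * v i))"

definition verification_op :: "'b::finite op \<Rightarrow> ('b \<Rightarrow> complex) \<Rightarrow> bool" where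
  "verification_op Om psi \<longleftrightarrow>
     psd_on UNIV Om \<and> psd_on UNIV (\<lambda>i j. id_op i j - Om i j) \<and>
     mat_vec Om psi = psi \<and>
     (\<forall>v. mat_vec Om v = v \<longrightarrow> (\<exists>c. v = (\<lambda>i. c * psi i)))"

definition second_largest_eigenvalue :: "'b::finite op \<Rightarrow> real \<Rightarrow> bool" where
  "second_largest_eigenvalue Om b \<longleftrightarrow>
     b \<noteq> 1 \<and> is_eigenvalue Om (complex_of_real b) \<and>
     (\<forall>m::real. is_eigenvalue Om (complex_of_real m) \<and> m \<noteq> 1 \<longrightarrow> m \<le> b)"

definition idx :: "nat \<Rightarrow> 'b list set" where
  "idx n = {xs. length xs = n}"

definition tensor_ops :: "'b op list \<Rightarrow> 'b list op" where
  "tensor_ops As = (\<lambda>xs ys. \<Prod>k<length As. (As ! k) (xs ! k) (ys ! k))"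

definition density_op :: "nat \<Rightarrow> 'b list op \<Rightarrow> bool" where
  "density_op n rho \<longleftrightarrow> psd_on (idx n) rho \<and> (\<Sum>xs\<in>idx n. rho xs xs) = 1"

text \<open>Permutation invariance: P_sigma rho P_sigma^dagger = rho for all permutations sigma
of the n tensor factors.\<close>
definition perm_invariant :: "nat \<Rightarrow> 'b list op \<Rightarrow> bool" where
  "perm_invariant n rho \<longleftrightarrow>
     (\<forall>s. s permutes {..<n} \<longrightarrow>
        (\<forall>xs\<in>idx n. \<forall>ys\<in>idx n. rho (permute_list s xs) (permute_list s ys) = rho xs ys))"

definition tr_prod :: "nat \<Rightarrow> 'b list op \<Rightarrow> 'b list op \<Rightarrow> real" where
  "tr_prod n A rho = Re (\<Sum>xs\<in>idx n. \<Sum>ys\<in>idx n. A xs ys * rho ys xs)"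

definition p_rho :: "nat \<Rightarrow> 'b op \<Rightarrow> 'b list op \<Rightarrow> real" where
  "p_rho N Om rho = tr_prod (N+1) (tensor_ops (replicate N Om @ [id_op])) rho"

definition f_rho :: "nat \<Rightarrow> 'b op \<Rightarrow> ('b \<Rightarrow> complex) \<Rightarrow> 'b list op \<Rightarrow> real" where
  "f_rho N Om psi rho = tr_prod (N+1) (tensor_ops (replicate N Om @ [proj_op psi])) rho"

text \<open>F(N,delta,Omega): the minimum (attained, written as infimum) of f/p over
permutation-invariant density operators with p >= delta.\<close>
definition F_min :: "nat \<Rightarrow> real \<Rightarrow> 'b op \<Rightarrow> ('b \<Rightarrow> complex) \<Rightarrow> real" where
  "F_min N d Om psi = Inf {f_rho N Om psi rho / p_rho N Om rho | rho.
      density_op (N+1) rho \<and> perm_invariant (N+1) rho \<and> p_rho N Om rho \<ge> d}"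

end

(* Expand Omega = sum_j l_j |u_j><u_j| in an orthonormal eigenbasis with u_0 = psi, l_0 = 1 and
   0 <= l_j <= beta otherwise. For a permutation-invariant rho, p and p - f become expectations,
   under the symmetric probability distribution q(js) = <u_js|rho|u_js> on index lists js, of
   prod_{k<N} l_(js_k), respectively of the same product on the event js_N <> 0. Averaging over the
   N + 1 transpositions that move a position to the last one reduces N (1 - beta) (p - f) + p <= 1,
   and (N + 1) (p - f) <= 1 when beta <= 1/2, to elementary inequalities for the products
   prod_{k<>i} a_k of numbers a_k in [0, 1]; both give the lower bounds on f/p = 1 - (p - f)/p.
   Equality is attained by mixtures of psi^(N+1) and the symmetrised states
   psi x ... x v x ... x psi, with v an eigenvector for beta or for 0. *)

theory Submission
  imports Defs
begin

section \<open>Inner product and Hermitian matrices\<close>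

definition cinner :: "('b::finite \<Rightarrow> complex) \<Rightarrow> ('b \<Rightarrow> complex) \<Rightarrow> complex" where
  "cinner u v = (\<Sum>a\<in>UNIV. cnj (u a) * v a)"

definition hermitian :: "'b::finite op \<Rightarrow> bool" where
  "hermitian A \<longleftrightarrow> (\<forall>i j. A j i = cnj (A i j))"

lemma Re_of_real_mult: "Re (of_real a * z) = a * Re z"
  by simp

lemma cinner_swap: "cinner v u = cnj (cinner u v)"
  unfolding cinner_def by (simp add: mult.commute)

lemma cinner_scale_right: "cinner u (\<lambda>a. c * v a) = c * cinner u v"
  unfolding cinner_def by (simp add: sum_distrib_left algebra_simps)

lemma cinner_scale_left: "cinner (\<lambda>a. c * u a) v = cnj c * cinner u v"
  unfolding cinner_def by (simp add: sum_distrib_left algebra_simps)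

lemma cinner_add_right: "cinner u (\<lambda>a. v a + w a) = cinner u v + cinner u w"
  unfolding cinner_def by (simp add: sum.distrib algebra_simps)

lemma cinner_add_left: "cinner (\<lambda>a. v a + w a) u = cinner v u + cinner w u"
  unfolding cinner_def by (simp add: sum.distrib algebra_simps)

lemma cinner_diff_right: "cinner u (\<lambda>a. v a - w a) = cinner u v - cinner u w"
  unfolding cinner_def by (simp add: sum_subtractf algebra_simps)

lemma cinner_diff_left: "cinner (\<lambda>a. v a - w a) u = cinner v u - cinner w u"
  unfolding cinner_def by (simp add: sum_subtractf algebra_simps)

lemma cinner_sum_right: "cinner u (\<lambda>a. \<Sum>i\<in>I. f i a) = (\<Sum>i\<in>I. cinner u (f i))"
  unfolding cinner_def by (simp add: sum_distrib_left) (rule sum.swap)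

lemma cinner_sum_left: "cinner (\<lambda>a. \<Sum>i\<in>I. f i a) u = (\<Sum>i\<in>I. cinner (f i) u)"
  unfolding cinner_def by (simp add: sum_distrib_right) (rule sum.swap)

lemma cinner_indicator_left: "cinner (\<lambda>y. if y = x then 1 else 0) v = v x"
proof -
  have eq: "(\<lambda>a. cnj (if a = x then 1 else 0) * v a) = (\<lambda>a. if a = x then v a else 0)"
    by auto
  show ?thesis
    unfolding cinner_def eq by simp
qed

lemma cinner_indicator_right: "cinner v (\<lambda>y. if y = x then 1 else 0) = cnj (v x)"
  using cinner_indicator_left[of x v] cinner_swap[of v] by simp

lemma cinner_self: "cinner v v = of_real (\<Sum>a\<in>UNIV. (cmod (v a))\<^sup>2)"
  unfolding cinner_def of_real_sum
  by (rule sum.cong, simp, subst complex_norm_square, simp add: mult.commute)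

lemma cinner_self_Re: "Re (cinner v v) = (\<Sum>a\<in>UNIV. (cmod (v a))\<^sup>2)"
  by (simp only: cinner_self Re_complex_of_real)

lemma cinner_self_eq_0D:
  assumes "cinner v v = 0"
  shows "v = (\<lambda>_. 0)"
proof
  fix a
  have "(\<Sum>a\<in>UNIV. (cmod (v a))\<^sup>2) = 0"
    using assms cinner_self_Re[of v] by simp
  then have "(cmod (v a))\<^sup>2 = 0"
    using sum_nonneg_eq_0_iff[of UNIV "\<lambda>a. (cmod (v a))\<^sup>2"] by simp
  then show "v a = 0" by simp
qed

lemma mat_vec_scale: "mat_vec A (\<lambda>a. c * v a) = (\<lambda>a. c * mat_vec A v a)"
  unfolding mat_vec_def by (simp add: sum_distrib_left algebra_simps)

lemma mat_vec_add: "mat_vec A (\<lambda>a. v a + w a) = (\<lambda>a. mat_vec A v a + mat_vec A w a)"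
  unfolding mat_vec_def by (simp add: sum.distrib algebra_simps)

lemma mat_vec_id_op: "mat_vec id_op w = w"
proof
  fix i
  have eq: "(\<lambda>j. id_op i j * w j) = (\<lambda>j. if j = i then w j else 0)"
    by (auto simp: id_op_def)
  show "mat_vec id_op w i = w i"
    unfolding mat_vec_def eq by simp
qed

lemma mat_vec_proj_op: "mat_vec (proj_op psi) w = (\<lambda>a. cinner psi w * psi a)"
  unfolding mat_vec_def proj_op_def cinner_def by (simp add: sum_distrib_left mult_ac)

lemma cinner_mat_vec_hermitian:
  assumes "hermitian A"
  shows "cinner u (mat_vec A v) = cinner (mat_vec A u) v"
proof -
  have "cinner u (mat_vec A v) = (\<Sum>a\<in>UNIV. \<Sum>b\<in>UNIV. cnj (u a) * A a b * v b)"
    unfolding cinner_def mat_vec_def by (simp add: sum_distrib_left mult.assoc)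
  also have "\<dots> = (\<Sum>b\<in>UNIV. \<Sum>a\<in>UNIV. cnj (u a) * A a b * v b)"
    by (rule sum.swap)
  also have "\<dots> = (\<Sum>b\<in>UNIV. \<Sum>a\<in>UNIV. cnj (A b a * u a) * v b)"
  proof (intro sum.cong refl)
    fix a b
    have "A a b = cnj (A b a)"
      using assms unfolding hermitian_def by metis
    then show "cnj (u a) * A a b * v b = cnj (A b a * u a) * v b"
      by simp
  qed
  also have "\<dots> = cinner (mat_vec A u) v"
    unfolding cinner_def mat_vec_def by (simp add: sum_distrib_right)
  finally show ?thesis .
qed

lemma psd_on_UNIV_hermitian: "psd_on UNIV A \<Longrightarrow> hermitian A"
  unfolding psd_on_def hermitian_def by blast

lemma psd_on_UNIV_cinner_nonneg:
  assumes "psd_on UNIV A"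
  shows "0 \<le> Re (cinner v (mat_vec A v))"
proof -
  have "cinner v (mat_vec A v) = (\<Sum>i\<in>UNIV. \<Sum>j\<in>UNIV. cnj (v i) * A i j * v j)"
    unfolding cinner_def mat_vec_def by (simp add: sum_distrib_left mult.assoc)
  moreover have "0 \<le> Re (\<Sum>i\<in>UNIV. \<Sum>j\<in>UNIV. cnj (v i) * A i j * v j)"
    using assms unfolding psd_on_def by blast
  ultimately show ?thesis
    by simp
qed

lemma cinner_self_pos:
  assumes "v \<noteq> (\<lambda>_. 0)"
  shows "0 < Re (cinner v v)"
proof -
  have "0 \<le> Re (cinner v v)"
    unfolding cinner_self_Re by (rule sum_nonneg) simp
  moreover have "Re (cinner v v) \<noteq> 0"
  proof
    assume "Re (cinner v v) = 0"
    then have "cinner v v = 0"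
      unfolding cinner_self Re_complex_of_real by simp
    then show False
      using assms cinner_self_eq_0D by blast
  qed
  ultimately show ?thesis by simp
qed

definition normalize_vec :: "('b::finite \<Rightarrow> complex) \<Rightarrow> 'b \<Rightarrow> complex" where
  "normalize_vec v = (\<lambda>a. of_real (1 / sqrt (Re (cinner v v))) * v a)"

lemma Re_cinner_normalize_vec:
  assumes "v \<noteq> (\<lambda>_. 0)"
  shows "Re (cinner (normalize_vec v) (mat_vec A (normalize_vec v))) = Re (cinner v (mat_vec A v)) / Re (cinner v v)"
proof -
  let ?s = "Re (cinner v v)"
  have "Re (cinner (normalize_vec v) (mat_vec A (normalize_vec v))) =
      (1 / sqrt ?s) * (1 / sqrt ?s) * Re (cinner v (mat_vec A v))"
    unfolding normalize_vec_def mat_vec_scale cinner_scale_left cinner_scale_right by simp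
  also have "\<dots> = Re (cinner v (mat_vec A v)) / ?s"
    using cinner_self_pos[OF assms] by (simp add: real_sqrt_mult_self[of ?s])
  finally show ?thesis .
qed

lemma cinner_normalize_vec_self:
  assumes "v \<noteq> (\<lambda>_. 0)"
  shows "cinner (normalize_vec v) (normalize_vec v) = 1"
proof -
  have "cinner (normalize_vec v) (normalize_vec v) = of_real (Re (cinner (normalize_vec v) (normalize_vec v)))"
    unfolding cinner_self Re_complex_of_real ..
  also have "\<dots> = 1"
    using Re_cinner_normalize_vec[OF assms, of id_op] cinner_self_pos[OF assms]
    unfolding mat_vec_id_op by simp
  finally show ?thesis .
qed

lemma cinner_normalize_vec_right: "cinner u v = 0 \<Longrightarrow> cinner u (normalize_vec v) = 0"
  unfolding normalize_vec_def cinner_scale_right by simp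

lemma unit_vec_cinner: "unit_vec v \<longleftrightarrow> cinner v v = 1"
  by (simp only: unit_vec_def cinner_self of_real_eq_1_iff)

section \<open>Orthonormal eigenbases of Hermitian matrices\<close>

definition orthonormal :: "(nat \<Rightarrow> 'b::finite \<Rightarrow> complex) \<Rightarrow> nat \<Rightarrow> bool" where
  "orthonormal u k \<longleftrightarrow> (\<forall>i<k. \<forall>j<k. cinner (u i) (u j) = (if i = j then 1 else 0))"

definition eigenpairs :: "'b::finite op \<Rightarrow> (nat \<Rightarrow> 'b \<Rightarrow> complex) \<Rightarrow> (nat \<Rightarrow> real) \<Rightarrow> nat \<Rightarrow> bool" where
  "eigenpairs A u l k \<longleftrightarrow> (\<forall>i<k. mat_vec A (u i) = (\<lambda>a. of_real (l i) * u i a))"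

definition orth_residual :: "(nat \<Rightarrow> 'b::finite \<Rightarrow> complex) \<Rightarrow> nat \<Rightarrow> 'b \<Rightarrow> 'b \<Rightarrow> complex" where
  "orth_residual u k x = (\<lambda>y. (if y = x then 1 else 0) - (\<Sum>i<k. cnj (u i x) * u i y))"

lemma orth_residual_orthogonal:
  assumes "orthonormal u k" "j < k"
  shows "cinner (u j) (orth_residual u k x) = 0"
proof -
  have "cinner (u j) (orth_residual u k x) = cnj (u j x) - (\<Sum>i<k. cnj (u i x) * cinner (u j) (u i))"
    unfolding orth_residual_def
    by (simp add: cinner_diff_right cinner_sum_right cinner_scale_right cinner_indicator_right)
  also have "(\<Sum>i<k. cnj (u i x) * cinner (u j) (u i)) = (\<Sum>i<k. if i = j then cnj (u i x) else 0)"
    using assms unfolding orthonormal_def by (intro sum.cong) auto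
  finally show ?thesis
    using assms(2) by simp
qed

lemma orth_residual_norm:
  assumes "orthonormal u k"
  shows "cinner (orth_residual u k x) (orth_residual u k x) = 1 - of_real (\<Sum>i<k. (cmod (u i x))\<^sup>2)"
proof -
  have sq: "(\<Sum>i<k. u i x * cnj (u i x)) = of_real (\<Sum>i<k. (cmod (u i x))\<^sup>2)"
    unfolding of_real_sum by (rule sum.cong, simp, subst complex_norm_square, simp)
  have "cinner (orth_residual u k x) (orth_residual u k x)
      = orth_residual u k x x - (\<Sum>i<k. u i x * cinner (u i) (orth_residual u k x))"
    unfolding orth_residual_def[of u k x]
    by (simp add: cinner_diff_left cinner_sum_left cinner_scale_left cinner_indicator_left orth_residual_def)
  also have "(\<Sum>i<k. u i x * cinner (u i) (orth_residual u k x)) = 0"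
    using orth_residual_orthogonal[OF assms] by simp
  finally show ?thesis
    unfolding orth_residual_def using sq by (simp add: mult.commute)
qed

lemma orth_residual_norm_Re:
  assumes "orthonormal u k"
  shows "Re (cinner (orth_residual u k x) (orth_residual u k x)) = 1 - (\<Sum>i<k. (cmod (u i x))\<^sup>2)"
  using orth_residual_norm[OF assms] by simp

lemma orthonormal_pointwise_le_1:
  assumes "orthonormal u k"
  shows "(\<Sum>i<k. (cmod (u i x))\<^sup>2) \<le> 1"
  using orth_residual_norm_Re[OF assms, of x] cinner_self_Re[of "orth_residual u k x"]
    sum_nonneg[of UNIV "\<lambda>a. (cmod (orth_residual u k x a))\<^sup>2"]
  by simp

lemma orthonormal_total_weight:
  assumes "orthonormal u k"
  shows "(\<Sum>x\<in>UNIV. \<Sum>i<k. (cmod (u i x))\<^sup>2) = real k"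
proof -
  have "(\<Sum>x\<in>UNIV. \<Sum>i<k. (cmod (u i x))\<^sup>2) = (\<Sum>i<k. \<Sum>x\<in>UNIV. (cmod (u i x))\<^sup>2)"
    by (rule sum.swap)
  also have "\<dots> = (\<Sum>i<k. 1)"
  proof (rule sum.cong[OF refl])
    fix i assume "i \<in> {..<k}"
    then have "cinner (u i) (u i) = 1"
      using assms unfolding orthonormal_def by auto
    then show "(\<Sum>x\<in>UNIV. (cmod (u i x))\<^sup>2) = 1"
      using cinner_self_Re[of "u i"] by simp
  qed
  finally show ?thesis by simp
qed

text \<open>If all residuals vanished, every point would carry weight 1, for a total weight \<open>CARD('b) > k\<close>.\<close>

lemma orthonormal_complement_nonzero:
  fixes u :: "nat \<Rightarrow> 'b::finite \<Rightarrow> complex"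
  assumes "orthonormal u k" "k < CARD('b)"
  obtains w where "w \<noteq> (\<lambda>_. 0)" "\<forall>i<k. cinner (u i) w = 0"
proof -
  have "\<exists>x. orth_residual u k x \<noteq> (\<lambda>_. 0)"
  proof (rule ccontr)
    assume "\<not> ?thesis"
    then have "Re (cinner (orth_residual u k x) (orth_residual u k x)) = 0" for x
      by (simp add: cinner_def)
    then have "(\<Sum>i<k. (cmod (u i x))\<^sup>2) = 1" for x
      using orth_residual_norm_Re[OF assms(1), of x] by simp
    then show False
      using orthonormal_total_weight[OF assms(1)] assms(2) by simp
  qed
  then show ?thesis
    using that orth_residual_orthogonal[OF assms(1)] by blast
qed

lemma orthonormal_completeness:
  fixes u :: "nat \<Rightarrow> 'b::finite \<Rightarrow> complex"
  assumes "orthonormal u CARD('b)"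
  shows "(\<Sum>i<CARD('b). cnj (u i x) * u i y) = (if y = x then 1 else 0)"
proof -
  let ?w = "\<lambda>x. 1 - (\<Sum>i<CARD('b). (cmod (u i x))\<^sup>2)"
  have "(\<Sum>x\<in>UNIV. ?w x) = 0"
    using orthonormal_total_weight[OF assms] by (simp add: sum_subtractf)
  moreover have "\<forall>x\<in>UNIV. 0 \<le> ?w x"
    using orthonormal_pointwise_le_1[OF assms] by simp
  ultimately have "(\<Sum>i<CARD('b). (cmod (u i x))\<^sup>2) = 1"
    using sum_nonneg_eq_0_iff[of UNIV ?w] by simp
  then have "cinner (orth_residual u CARD('b) x) (orth_residual u CARD('b) x) = 0"
    by (simp only: orth_residual_norm[OF assms, of x] of_real_1 diff_self)
  then have "orth_residual u CARD('b) x = (\<lambda>_. 0)"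
    by (rule cinner_self_eq_0D)
  then have "orth_residual u CARD('b) x y = 0"
    by simp
  then show ?thesis
    unfolding orth_residual_def by (simp add: mult.commute)
qed

lemma quadratic_nonpos_linear_coeff_eq_0:
  fixes a c :: real
  assumes c: "c \<le> 0" and nonpos: "\<And>t. c * t\<^sup>2 + 2 * a * t \<le> 0"
  shows "a = 0"
proof -
  define t where "t = a / (1 - c)"
  have ta: "t * (1 - c) = a"
    unfolding t_def using c by simp
  have "(c * t\<^sup>2 + 2 * a * t) * (1 - c)\<^sup>2 = c * (t * (1 - c))\<^sup>2 + 2 * a * (t * (1 - c)) * (1 - c)"
    by (simp add: power2_eq_square algebra_simps)
  also have "\<dots> = a\<^sup>2 * (2 - c)"
    unfolding ta by (simp add: power2_eq_square algebra_simps)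
  finally have "a\<^sup>2 * (2 - c) = (c * t\<^sup>2 + 2 * a * t) * (1 - c)\<^sup>2" ..
  also have "\<dots> \<le> 0"
    using nonpos[of t] by (simp add: mult_nonpos_nonneg)
  finally show ?thesis
    using c by (simp add: mult_le_0_iff)
qed

lemma compact_unit_sphere_orthogonal:
  "compact (sphere (0::complex^'b::finite) 1 \<inter> {x. \<forall>i. i < k \<longrightarrow> cinner (u i) (vec_nth x) = 0})"
proof (intro compact_Int_closed compact_sphere closed_Collect_all closed_Collect_imp)
  fix i
  show "open {x::complex^'b. i < k}"
    by (cases "i < k") auto
  show "closed {x::complex^'b. cinner (u i) (vec_nth x) = 0}"
    unfolding cinner_def by (intro closed_Collect_eq continuous_intros)
qed

lemma rayleigh_max_on_complement:
  fixes A :: "'b::finite op" and u :: "nat \<Rightarrow> 'b \<Rightarrow> complex"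
  assumes "w \<noteq> (\<lambda>_. 0)" "\<forall>i<k. cinner (u i) w = 0"
  obtains v m where "cinner v v = 1" "\<forall>i<k. cinner (u i) v = 0" "Re (cinner v (mat_vec A v)) = m"
    "\<And>y. \<forall>i<k. cinner (u i) y = 0 \<Longrightarrow> Re (cinner y (mat_vec A y)) \<le> m * Re (cinner y y)"
proof -
  define S where "S = sphere (0::complex^'b) 1 \<inter> {x. \<forall>i. i < k \<longrightarrow> cinner (u i) (vec_nth x) = 0}"
  define f where "f x = Re (cinner (vec_nth x) (mat_vec A (vec_nth x)))" for x :: "complex^'b"
  have S_iff: "x \<in> S \<longleftrightarrow> cinner (vec_nth x) (vec_nth x) = 1 \<and> (\<forall>i<k. cinner (u i) (vec_nth x) = 0)" for x
    unfolding S_def by (auto simp: norm_vec_def L2_set_def unit_vec_def unit_vec_cinner[symmetric])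
  have vec_nth_lambda: "vec_nth (vec_lambda y) = y" for y :: "'b \<Rightarrow> complex"
    by (rule ext) simp
  have normalized_in_S: "vec_lambda (normalize_vec y) \<in> S" if "y \<noteq> (\<lambda>_. 0)" "\<forall>i<k. cinner (u i) y = 0" for y
    unfolding S_iff vec_nth_lambda using that by (simp add: cinner_normalize_vec_self cinner_normalize_vec_right)
  have "continuous_on S f"
    unfolding f_def cinner_def mat_vec_def by (intro continuous_intros)
  moreover have "S \<noteq> {}"
    using normalized_in_S[OF assms] by blast
  ultimately obtain x where x: "x \<in> S" "\<forall>y\<in>S. f y \<le> f x"
    using continuous_attains_sup[OF compact_unit_sphere_orthogonal[of k u, folded S_def]] by blast
  have "Re (cinner y (mat_vec A y)) \<le> f x * Re (cinner y y)" if y: "\<forall>i<k. cinner (u i) y = 0" for y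
  proof (cases "y = (\<lambda>_. 0)")
    case True
    then show ?thesis by (simp add: cinner_def)
  next
    case False
    have "f (vec_lambda (normalize_vec y)) \<le> f x"
      using x(2) normalized_in_S[OF False y] by blast
    then have "Re (cinner y (mat_vec A y)) / Re (cinner y y) \<le> f x"
      unfolding f_def vec_nth_lambda Re_cinner_normalize_vec[OF False] .
    then show ?thesis
      using cinner_self_pos[OF False] by (simp add: pos_divide_le_eq)
  qed
  then show ?thesis
    using that[of "vec_nth x" "f x"] x(1) unfolding S_iff f_def by blast
qed

text \<open>First variation: along \<open>v + t w\<close> with \<open>w\<close> in the complement, the Rayleigh quotient
  has a maximum at \<open>t = 0\<close>, so \<open>A v - m v\<close> is orthogonal to the complement.\<close>

lemma rayleigh_maximizer_first_variation:
  fixes A :: "'b::finite op"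
  assumes herm: "hermitian A"
    and v_orth: "\<forall>i<k. cinner (u i) v = 0" and v_unit: "cinner v v = 1"
    and v_val: "Re (cinner v (mat_vec A v)) = m"
    and max: "\<And>y. \<forall>i<k. cinner (u i) y = 0 \<Longrightarrow> Re (cinner y (mat_vec A y)) \<le> m * Re (cinner y y)"
    and w: "\<forall>i<k. cinner (u i) w = 0"
  shows "cinner w (\<lambda>a. mat_vec A v a - of_real m * v a) = 0"
proof -
  define g where "g = (\<lambda>a. mat_vec A v a - of_real m * v a)"
  define Q where "Q y = Re (cinner y (mat_vec A y)) - m * Re (cinner y y)" for y
  have Q_nonpos: "Q y \<le> 0" if "\<forall>i<k. cinner (u i) y = 0" for y
    using max[OF that] unfolding Q_def by simp
  have Re_0: "Re (cinner w g) = 0" if w: "\<forall>i<k. cinner (u i) w = 0" for w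
  proof (rule quadratic_nonpos_linear_coeff_eq_0)
    show "Q w \<le> 0"
      using Q_nonpos w by blast
    fix t
    have "Re (cinner v (mat_vec A w)) = Re (cinner w (mat_vec A v))" "Re (cinner v w) = Re (cinner w v)"
      using cinner_mat_vec_hermitian[OF herm, of v w] cinner_swap[of "mat_vec A v" w] cinner_swap[of v w]
      by simp_all
    then have line: "Q (\<lambda>a. v a + of_real t * w a) = 2 * t * Re (cinner w g) + t\<^sup>2 * Q w"
      using v_unit v_val
      unfolding Q_def g_def mat_vec_add mat_vec_scale cinner_add_left cinner_add_right cinner_scale_left
        cinner_scale_right cinner_diff_right
      by (simp add: algebra_simps power2_eq_square)
    have orth: "\<forall>i<k. cinner (u i) (\<lambda>a. v a + of_real t * w a) = 0"
      using v_orth w by (simp add: cinner_add_right cinner_scale_right)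
    show "Q w * t\<^sup>2 + 2 * Re (cinner w g) * t \<le> 0"
      using Q_nonpos[OF orth] line by (simp add: algebra_simps)
  qed
  show ?thesis
    unfolding g_def[symmetric]
  proof (rule complex_eqI)
    show "Re (cinner w g) = Re 0"
      using Re_0[OF w] by simp
    have "\<forall>i<k. cinner (u i) (\<lambda>a. \<i> * w a) = 0"
      using w by (simp add: cinner_scale_right)
    then show "Im (cinner w g) = Im 0"
      using Re_0[of "\<lambda>a. \<i> * w a"] by (simp add: cinner_scale_left)
  qed
qed

text \<open>By hermiticity \<open>A v - m v\<close> is also orthogonal to the eigenvectors \<open>u i\<close>, hence lies in the
  complement and is orthogonal to itself.\<close>

lemma rayleigh_maximizer_eigenvector:
  fixes A :: "'b::finite op"
  assumes herm: "hermitian A" and eig: "eigenpairs A u l k"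
    and v_orth: "\<forall>i<k. cinner (u i) v = 0" and v_unit: "cinner v v = 1"
    and v_val: "Re (cinner v (mat_vec A v)) = m"
    and max: "\<And>y. \<forall>i<k. cinner (u i) y = 0 \<Longrightarrow> Re (cinner y (mat_vec A y)) \<le> m * Re (cinner y y)"
  shows "mat_vec A v = (\<lambda>a. of_real m * v a)"
proof -
  define g where "g = (\<lambda>a. mat_vec A v a - of_real m * v a)"
  have "cinner (u i) g = 0" if i: "i < k" for i
  proof -
    have "cinner (u i) g = cinner (mat_vec A (u i)) v - of_real m * cinner (u i) v"
      unfolding g_def cinner_diff_right cinner_scale_right cinner_mat_vec_hermitian[OF herm] ..
    then show ?thesis
      using eig v_orth i unfolding eigenpairs_def by (simp add: cinner_scale_left)
  qed
  then have "cinner g g = 0"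
    unfolding g_def by (intro rayleigh_maximizer_first_variation[OF herm v_orth v_unit v_val max]) auto
  then have "g = (\<lambda>_. 0)"
    by (rule cinner_self_eq_0D)
  then show ?thesis
    unfolding g_def by (auto simp: fun_eq_iff)
qed

lemma orthonormal_eigenpairs_extend:
  fixes A :: "'b::finite op"
  assumes herm: "hermitian A" and u: "orthonormal u k" and eig: "eigenpairs A u l k"
    and k: "k < CARD('b)"
  obtains v m where "orthonormal (u(k := v)) (Suc k)" "eigenpairs A (u(k := v)) (l(k := m)) (Suc k)"
proof -
  obtain w where w: "w \<noteq> (\<lambda>_. 0)" "\<forall>i<k. cinner (u i) w = 0"
    using orthonormal_complement_nonzero[OF u k] .
  obtain v m where v: "cinner v v = 1" "\<forall>i<k. cinner (u i) v = 0"
    "Re (cinner v (mat_vec A v)) = m"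
    "\<And>y. \<forall>i<k. cinner (u i) y = 0 \<Longrightarrow> Re (cinner y (mat_vec A y)) \<le> m * Re (cinner y y)"
    using rayleigh_max_on_complement[OF w, of A] by blast
  have "mat_vec A v = (\<lambda>a. of_real m * v a)"
    using rayleigh_maximizer_eigenvector[OF herm eig v(2,1,3)] v(4) by blast
  then have "eigenpairs A (u(k := v)) (l(k := m)) (Suc k)"
    using eig unfolding eigenpairs_def by (auto simp: less_Suc_eq)
  moreover have "cinner v (u i) = 0" if "i < k" for i
    using v(2) that cinner_swap[of v "u i"] by simp
  then have "orthonormal (u(k := v)) (Suc k)"
    using u v(1,2) unfolding orthonormal_def by (auto simp: less_Suc_eq)
  ultimately show ?thesis
    using that by blast
qed

lemma hermitian_eigenbasis:
  fixes A :: "'b::finite op"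
  assumes herm: "hermitian A" and psi: "cinner psi psi = 1" "mat_vec A psi = psi"
  obtains u l where "orthonormal u CARD('b)" "eigenpairs A u l CARD('b)" "u 0 = psi" "l 0 = 1"
proof -
  have "k \<le> CARD('b) \<Longrightarrow> \<exists>u l. orthonormal u k \<and> eigenpairs A u l k \<and> u 0 = psi \<and> l 0 = 1"
    if "1 \<le> k" for k
    using that
  proof (induction k rule: dec_induct)
    case base
    have "orthonormal (\<lambda>_. psi) 1" "eigenpairs A (\<lambda>_. psi) (\<lambda>_. 1) 1"
      using psi unfolding orthonormal_def eigenpairs_def by simp_all
    then show ?case by blast
  next
    case (step k)
    then obtain u l where ul: "orthonormal u k" "eigenpairs A u l k" "u 0 = psi" "l 0 = 1"
      by auto
    obtain v m where "orthonormal (u(k := v)) (Suc k)" "eigenpairs A (u(k := v)) (l(k := m)) (Suc k)"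
      using orthonormal_eigenpairs_extend[OF herm ul(1,2)] step.prems by auto
    moreover have "(u(k := v)) 0 = psi" "(l(k := m)) 0 = 1"
      using ul(3,4) step.hyps(1) by auto
    ultimately show ?case by blast
  qed
  moreover have "1 \<le> CARD('b)"
    by (simp add: Suc_leI)
  ultimately show ?thesis
    using that by blast
qed

lemma eigenbasis_expansion:
  fixes A :: "'b::finite op"
  assumes u: "orthonormal u CARD('b)" and eig: "eigenpairs A u l CARD('b)"
  shows "A x y = (\<Sum>j<CARD('b). of_real (l j) * u j x * cnj (u j y))"
proof -
  have "(\<Sum>j<CARD('b). of_real (l j) * u j x * cnj (u j y)) = (\<Sum>j<CARD('b). mat_vec A (u j) x * cnj (u j y))"
    using eig unfolding eigenpairs_def by (intro sum.cong refl) simp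
  also have "\<dots> = (\<Sum>z\<in>UNIV. A x z * (\<Sum>j<CARD('b). cnj (u j y) * u j z))"
    unfolding mat_vec_def sum_distrib_right sum_distrib_left by (subst sum.swap) (simp add: mult_ac)
  also have "\<dots> = (\<Sum>z\<in>UNIV. if z = y then A x z else 0)"
    unfolding orthonormal_completeness[OF u] by (intro sum.cong refl) simp
  finally show ?thesis
    by simp
qed

lemma eigenpairs_id_op: "eigenpairs id_op u (\<lambda>_. 1) k"
  unfolding eigenpairs_def mat_vec_id_op by simp

lemma eigenpairs_proj_op:
  "orthonormal u k \<Longrightarrow> 0 < k \<Longrightarrow> eigenpairs (proj_op (u 0)) u (\<lambda>j. if j = 0 then 1 else 0) k"
  unfolding eigenpairs_def orthonormal_def mat_vec_proj_op by auto

section \<open>Operators on tensor powers in a product basis\<close>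

definition lists_of_len :: "'c set \<Rightarrow> nat \<Rightarrow> 'c list set" where
  "lists_of_len A n = {xs. length xs = n \<and> set xs \<subseteq> A}"

lemma idx_eq_lists_of_len: "idx n = lists_of_len UNIV n"
  unfolding idx_def lists_of_len_def by simp

lemma lists_of_len_nth: "xs \<in> lists_of_len A n \<Longrightarrow> k < n \<Longrightarrow> xs ! k \<in> A"
  unfolding lists_of_len_def by auto

lemma finite_idx: "finite (idx n :: 'b::finite list set)"
  unfolding idx_eq_lists_of_len lists_of_len_def
  using finite_lists_length_eq[of "UNIV :: 'b set" n] by (simp add: conj_commute)

lemma lists_of_len_Suc: "lists_of_len A (Suc n) = (\<lambda>(a, xs). a # xs) ` (A \<times> lists_of_len A n)"
  unfolding lists_of_len_def by (auto simp: length_Suc_conv image_iff)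

lemma prod_sum_lists_of_len:
  fixes f :: "nat \<Rightarrow> 'c \<Rightarrow> 'd::comm_semiring_1"
  shows "(\<Prod>k<n. \<Sum>a\<in>A. f k a) = (\<Sum>xs\<in>lists_of_len A n. \<Prod>k<n. f k (xs ! k))"
proof (induction n arbitrary: f)
  case 0
  have "lists_of_len A 0 = {[]}"
    unfolding lists_of_len_def by auto
  then show ?case by simp
next
  case (Suc n)
  have inj: "inj_on (\<lambda>(a, xs). a # xs) (A \<times> lists_of_len A n)"
    by (auto simp: inj_on_def)
  have "(\<Prod>k<Suc n. \<Sum>a\<in>A. f k a) = (\<Sum>a\<in>A. f 0 a) * (\<Prod>k<n. \<Sum>a\<in>A. f (Suc k) a)"
    by (rule prod.lessThan_Suc_shift)
  also have "\<dots> = (\<Sum>a\<in>A. \<Sum>xs\<in>lists_of_len A n. f 0 a * (\<Prod>k<n. f (Suc k) (xs ! k)))"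
    unfolding Suc.IH by (rule sum_product)
  also have "\<dots> = (\<Sum>p\<in>A \<times> lists_of_len A n. (\<lambda>xs. \<Prod>k<Suc n. f k (xs ! k)) ((\<lambda>(a, xs). a # xs) p))"
    by (subst sum.cartesian_product, rule sum.cong[OF refl], clarify, subst prod.lessThan_Suc_shift, simp)
  also have "\<dots> = (\<Sum>xs\<in>lists_of_len A (Suc n). \<Prod>k<Suc n. f k (xs ! k))"
    unfolding lists_of_len_Suc by (rule sum.reindex[OF inj, symmetric, unfolded comp_def])
  finally show ?case .
qed

lemma sum_idx_prod:
  fixes f :: "nat \<Rightarrow> 'b::finite \<Rightarrow> 'd::comm_semiring_1"
  shows "(\<Sum>xs\<in>idx n. \<Prod>k<n. f k (xs ! k)) = (\<Prod>k<n. \<Sum>a\<in>UNIV. f k a)"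
  unfolding idx_eq_lists_of_len by (rule prod_sum_lists_of_len[symmetric])

lemma bij_betw_permute_list_lists_of_len:
  assumes s: "s permutes {..<n}"
  shows "bij_betw (permute_list s) (lists_of_len A n) (lists_of_len A n)"
proof (rule bij_betw_byWitness[where f' = "permute_list (inv s)"])
  have inv: "inv s permutes {..<n}"
    using s by (rule permutes_inv)
  show "\<forall>xs\<in>lists_of_len A n. permute_list (inv s) (permute_list s xs) = xs"
  proof
    fix xs assume "xs \<in> lists_of_len A n"
    then have "inv s permutes {..<length xs}"
      using inv unfolding lists_of_len_def by simp
    then have "permute_list (s \<circ> inv s) xs = permute_list (inv s) (permute_list s xs)"
      by (rule permute_list_compose)
    then show "permute_list (inv s) (permute_list s xs) = xs"
      using permutes_inv_o(1)[OF s] by simp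
  qed
  show "\<forall>xs\<in>lists_of_len A n. permute_list s (permute_list (inv s) xs) = xs"
  proof
    fix xs assume "xs \<in> lists_of_len A n"
    then have "s permutes {..<length xs}"
      using s unfolding lists_of_len_def by simp
    then have "permute_list (inv s \<circ> s) xs = permute_list s (permute_list (inv s) xs)"
      by (rule permute_list_compose)
    then show "permute_list s (permute_list (inv s) xs) = xs"
      using permutes_inv_o(2)[OF s] by simp
  qed
  show "permute_list s ` lists_of_len A n \<subseteq> lists_of_len A n"
    "permute_list (inv s) ` lists_of_len A n \<subseteq> lists_of_len A n"
    unfolding lists_of_len_def using s inv by auto
qed

definition tensor_basis :: "(nat \<Rightarrow> 'b \<Rightarrow> complex) \<Rightarrow> nat list \<Rightarrow> 'b list \<Rightarrow> complex" where
  "tensor_basis u js xs = (\<Prod>k<length js. u (js ! k) (xs ! k))"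

definition basis_weight :: "(nat \<Rightarrow> 'b::finite \<Rightarrow> complex) \<Rightarrow> nat \<Rightarrow> 'b list op \<Rightarrow> nat list \<Rightarrow> real" where
  "basis_weight u n rho js =
     Re (\<Sum>ys\<in>idx n. \<Sum>xs\<in>idx n. cnj (tensor_basis u js ys) * rho ys xs * tensor_basis u js xs)"

lemma tensor_ops_diagonal:
  fixes u :: "nat \<Rightarrow> 'b \<Rightarrow> complex" and As :: "'b op list"
  assumes len: "length As = n"
    and diag: "\<And>k x y. k < n \<Longrightarrow> (As ! k) x y = (\<Sum>j<D. of_real (c k j) * u j x * cnj (u j y))"
  shows "tensor_ops As xs ys = (\<Sum>js\<in>lists_of_len {..<D} n.
    of_real (\<Prod>k<n. c k (js ! k)) * tensor_basis u js xs * cnj (tensor_basis u js ys))"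
proof -
  have "tensor_ops As xs ys = (\<Prod>k<n. \<Sum>j<D. of_real (c k j) * u j (xs ! k) * cnj (u j (ys ! k)))"
    unfolding tensor_ops_def len using diag by simp
  also have "\<dots> = (\<Sum>js\<in>lists_of_len {..<D} n.
      \<Prod>k<n. of_real (c k (js ! k)) * u (js ! k) (xs ! k) * cnj (u (js ! k) (ys ! k)))"
    by (rule prod_sum_lists_of_len)
  also have "\<dots> = (\<Sum>js\<in>lists_of_len {..<D} n.
      of_real (\<Prod>k<n. c k (js ! k)) * tensor_basis u js xs * cnj (tensor_basis u js ys))"
    unfolding tensor_basis_def lists_of_len_def by (intro sum.cong refl) (simp add: prod.distrib)
  finally show ?thesis .
qed

lemma tr_prod_tensor_ops_diagonal:
  fixes u :: "nat \<Rightarrow> 'b::finite \<Rightarrow> complex" and As :: "'b op list"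
  assumes len: "length As = n"
    and diag: "\<And>k x y. k < n \<Longrightarrow> (As ! k) x y = (\<Sum>j<D. of_real (c k j) * u j x * cnj (u j y))"
  shows "tr_prod n (tensor_ops As) rho =
    (\<Sum>js\<in>lists_of_len {..<D} n. (\<Prod>k<n. c k (js ! k)) * basis_weight u n rho js)"
proof -
  let ?L = "lists_of_len {..<D} n"
  let ?I = "idx n :: 'b list set"
  define G where "G js xs ys =
    of_real (\<Prod>k<n. c k (js ! k)) * (cnj (tensor_basis u js ys) * rho ys xs * tensor_basis u js xs)"
    for js xs ys
  have tensor: "tensor_ops As xs ys =
      (\<Sum>js\<in>?L. of_real (\<Prod>k<n. c k (js ! k)) * tensor_basis u js xs * cnj (tensor_basis u js ys))" for xs ys
    by (rule tensor_ops_diagonal[OF len diag])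
  have "tr_prod n (tensor_ops As) rho = Re (\<Sum>xs\<in>?I. \<Sum>ys\<in>?I. \<Sum>js\<in>?L. G js xs ys)"
    unfolding tr_prod_def tensor sum_distrib_right G_def
    by (intro arg_cong[where f = Re] sum.cong refl) (simp add: mult_ac)
  also have "(\<Sum>xs\<in>?I. \<Sum>ys\<in>?I. \<Sum>js\<in>?L. G js xs ys) = (\<Sum>js\<in>?L. \<Sum>ys\<in>?I. \<Sum>xs\<in>?I. G js xs ys)"
    by (subst sum.swap, subst (2) sum.swap, subst sum.swap, rule refl)
  also have "\<dots> = (\<Sum>js\<in>?L. of_real (\<Prod>k<n. c k (js ! k)) *
      (\<Sum>ys\<in>?I. \<Sum>xs\<in>?I. cnj (tensor_basis u js ys) * rho ys xs * tensor_basis u js xs))"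
    unfolding G_def by (simp add: sum_distrib_left)
  also have "Re \<dots> = (\<Sum>js\<in>?L. (\<Prod>k<n. c k (js ! k)) * basis_weight u n rho js)"
    by (simp only: basis_weight_def Re_sum Re_of_real_mult)
  finally show ?thesis .
qed

lemma basis_weight_nonneg:
  assumes "density_op n rho"
  shows "0 \<le> basis_weight u n rho js"
  using assms unfolding density_op_def psd_on_def basis_weight_def by blast

lemma tensor_ops_replicate_id_op:
  assumes "xs \<in> idx n" "ys \<in> idx n"
  shows "tensor_ops (replicate n id_op) xs ys = (if xs = ys then 1 else 0)"
proof (cases "xs = ys")
  case True
  then show ?thesis
    unfolding tensor_ops_def id_op_def by simp
next
  case False
  moreover have "length xs = n" "length ys = n"
    using assms unfolding idx_def by auto
  ultimately obtain k where k: "k < n" "xs ! k \<noteq> ys ! k"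
    using nth_equalityI by metis
  then have "(\<Prod>k<n. id_op (xs ! k) (ys ! k)) = 0"
    by (intro prod_zero) (auto simp: id_op_def)
  then show ?thesis
    using False unfolding tensor_ops_def by simp
qed

lemma basis_weight_sum:
  fixes u :: "nat \<Rightarrow> 'b::finite \<Rightarrow> complex"
  assumes rho: "density_op n rho" and u: "orthonormal u CARD('b)"
  shows "(\<Sum>js\<in>lists_of_len {..<CARD('b)} n. basis_weight u n rho js) = 1"
proof -
  have id_diag: "id_op x y = (\<Sum>j<CARD('b). of_real 1 * u j x * cnj (u j y))" for x y
    using eigenbasis_expansion[OF u eigenpairs_id_op] by simp
  have "(\<Sum>js\<in>lists_of_len {..<CARD('b)} n. basis_weight u n rho js) =
      tr_prod n (tensor_ops (replicate n (id_op :: 'b op))) rho"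
    using tr_prod_tensor_ops_diagonal[where As = "replicate n id_op" and c = "\<lambda>_ _. 1" and u = u]
      id_diag by simp
  also have "\<dots> = Re (\<Sum>xs\<in>idx n. \<Sum>ys\<in>idx n. (if xs = ys then 1 else 0) * rho ys xs)"
    unfolding tr_prod_def by (intro arg_cong[where f = Re] sum.cong refl) (simp add: tensor_ops_replicate_id_op)
  also have "\<dots> = Re (\<Sum>xs\<in>idx n. rho xs xs)"
    by (simp add: if_distrib[of "\<lambda>z. z * _"] finite_idx cong: if_cong)
  also have "\<dots> = 1"
    using rho unfolding density_op_def by simp
  finally show ?thesis .
qed

lemma tensor_basis_permute_list:
  assumes s: "s permutes {..<n}" and "length js = n" "length xs = n"
  shows "tensor_basis u (permute_list s js) (permute_list s xs) = tensor_basis u js xs"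
proof -
  have "tensor_basis u (permute_list s js) (permute_list s xs) = (\<Prod>k<n. u (js ! s k) (xs ! s k))"
    unfolding tensor_basis_def using assms by (simp add: permute_list_nth)
  also have "\<dots> = (\<Prod>k<n. u (js ! k) (xs ! k))"
    using prod.permute[OF s, of "\<lambda>k. u (js ! k) (xs ! k)"] by (simp add: comp_def)
  finally show ?thesis
    unfolding tensor_basis_def using assms by simp
qed

lemma basis_weight_permute_list:
  fixes u :: "nat \<Rightarrow> 'b::finite \<Rightarrow> complex" and rho :: "'b list op"
  assumes rho: "perm_invariant n rho" and s: "s permutes {..<n}" and js: "length js = n"
  shows "basis_weight u n rho (permute_list s js) = basis_weight u n rho js"
proof -
  let ?I = "idx n :: 'b list set"
  have bij: "bij_betw (permute_list s) ?I ?I"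
    unfolding idx_eq_lists_of_len by (rule bij_betw_permute_list_lists_of_len[OF s])
  define F where "F js ys xs = cnj (tensor_basis u js ys) * rho ys xs * tensor_basis u js xs" for js ys xs
  have "(\<Sum>ys\<in>?I. \<Sum>xs\<in>?I. F (permute_list s js) ys xs) =
      (\<Sum>ys\<in>?I. \<Sum>xs\<in>?I. F (permute_list s js) (permute_list s ys) (permute_list s xs))"
    by (subst sum.reindex_bij_betw[OF bij, symmetric], subst (2) sum.reindex_bij_betw[OF bij, symmetric],
        rule refl)
  also have "\<dots> = (\<Sum>ys\<in>?I. \<Sum>xs\<in>?I. F js ys xs)"
  proof (intro sum.cong refl)
    fix ys xs assume "ys \<in> ?I" "xs \<in> ?I"
    moreover from this have "rho (permute_list s ys) (permute_list s xs) = rho ys xs"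
      using rho s unfolding perm_invariant_def by blast
    ultimately show "F (permute_list s js) (permute_list s ys) (permute_list s xs) = F js ys xs"
      unfolding F_def idx_def
      using tensor_basis_permute_list[OF s js, of ys u] tensor_basis_permute_list[OF s js, of xs u] by simp
  qed
  finally show ?thesis
    unfolding basis_weight_def F_def by simp
qed

section \<open>Symmetrisation inequalities\<close>

definition prod_except :: "(nat \<Rightarrow> real) \<Rightarrow> nat \<Rightarrow> nat \<Rightarrow> real" where
  "prod_except a n i = (\<Prod>k<n. if k = i then 1 else a k)"

lemma prod_except_Suc: "i < n \<Longrightarrow> prod_except a (Suc n) i = a n * prod_except a n i"
  unfolding prod_except_def by simp

lemma prod_except_last: "prod_except a (Suc n) n = (\<Prod>k<n. a k)"
  unfolding prod_except_def by simp

lemma prod_except_nonneg: "(\<And>k. k < n \<Longrightarrow> 0 \<le> a k) \<Longrightarrow> 0 \<le> prod_except a n i"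
  unfolding prod_except_def by (intro prod_nonneg) auto

lemma mult_prod_except: "i < n \<Longrightarrow> a i * prod_except a n i = (\<Prod>k<n. a k)"
  unfolding prod_except_def by (simp add: prod.remove[of "{..<n}" i])

lemma sum_prod_except_le:
  assumes "\<And>k. k < n \<Longrightarrow> 0 \<le> a k \<and> a k \<le> 1"
  shows "(\<Sum>i<n. prod_except a n i) - (real n - 1) * (\<Prod>k<n. a k) \<le> 1"
  using assms
proof (induction n)
  case 0
  then show ?case by simp
next
  case (Suc n)
  have IH: "(\<Sum>i<n. prod_except a n i) - (real n - 1) * (\<Prod>k<n. a k) \<le> 1"
    using Suc by simp
  have P: "0 \<le> (\<Prod>k<n. a k)" "(\<Prod>k<n. a k) \<le> 1"
    using Suc.prems by (auto intro: prod_nonneg prod_le_1)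
  have a: "0 \<le> a n" "a n \<le> 1"
    using Suc.prems by auto
  have "(\<Sum>i<Suc n. prod_except a (Suc n) i) = a n * (\<Sum>i<n. prod_except a n i) + (\<Prod>k<n. a k)"
    by (simp add: prod_except_Suc prod_except_last sum_distrib_left)
  then have "(\<Sum>i<Suc n. prod_except a (Suc n) i) - (real (Suc n) - 1) * (\<Prod>k<Suc n. a k)
      = a n * ((\<Sum>i<n. prod_except a n i) - (real n - 1) * (\<Prod>k<n. a k)) + (1 - a n) * (\<Prod>k<n. a k)"
    by (simp add: algebra_simps)
  also have "\<dots> \<le> a n * 1 + (1 - a n) * 1"
    using IH P a by (intro add_mono mult_left_mono) auto
  finally show ?case by simp
qed

text \<open>Marked factors satisfy \<open>1 - beta \<le> 1 - a i\<close>, so the left-hand side is at most \<open>N + 1\<close>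
  times the quantity bounded in \<open>sum_prod_except_le\<close>.\<close>

lemma sum_prod_except_marked_gap_le:
  assumes a: "\<And>k. k < Suc N \<Longrightarrow> 0 \<le> a k \<and> a k \<le> 1"
    and marked: "\<And>k. k < Suc N \<Longrightarrow> b k \<Longrightarrow> a k \<le> beta"
  shows "(\<Sum>i<Suc N. real N * (1 - beta) * (if b i then prod_except a (Suc N) i else 0)
      + prod_except a (Suc N) i) \<le> real N + 1"
proof -
  let ?E = "prod_except a (Suc N)"
  have "real N * (1 - beta) * (if b i then ?E i else 0) \<le> real N * ((1 - a i) * ?E i)"
    if i: "i < Suc N" for i
  proof -
    have "(1 - beta) * (if b i then ?E i else 0) \<le> (1 - a i) * ?E i"
      using a[OF i] marked[OF i] prod_except_nonneg[of "Suc N" a i] a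
      by (cases "b i") (auto intro: mult_right_mono)
    then show ?thesis
      by (simp add: mult.assoc mult_left_mono)
  qed
  then have "(\<Sum>i<Suc N. real N * (1 - beta) * (if b i then ?E i else 0) + ?E i)
      \<le> (\<Sum>i<Suc N. real N * ((1 - a i) * ?E i) + ?E i)"
    by (intro sum_mono add_right_mono) auto
  also have "\<dots> = real (Suc N) * (\<Sum>i<Suc N. ?E i) - real N * (\<Sum>i<Suc N. a i * ?E i)"
    by (simp add: algebra_simps sum.distrib sum_subtractf sum_distrib_left)
  also have "(\<Sum>i<Suc N. a i * ?E i) = real (Suc N) * (\<Prod>k<Suc N. a k)"
    by (simp add: mult_prod_except)
  also have "real (Suc N) * (\<Sum>i<Suc N. ?E i) - real N * (real (Suc N) * (\<Prod>k<Suc N. a k))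
      = real (Suc N) * ((\<Sum>i<Suc N. ?E i) - (real (Suc N) - 1) * (\<Prod>k<Suc N. a k))"
    by (simp add: algebra_simps)
  also have "\<dots> \<le> real (Suc N) * 1"
    using sum_prod_except_le[of "Suc N" a] a by (intro mult_left_mono) auto
  finally show ?thesis by simp
qed

lemma sum_prod_except_marked_le:
  assumes "\<And>k. k < n \<Longrightarrow> b k \<Longrightarrow> 0 \<le> a k \<and> a k \<le> 1/2"
    and "\<And>k. k < n \<Longrightarrow> \<not> b k \<Longrightarrow> a k = 1"
  shows "(\<Sum>i<n. if b i then prod_except a n i else 0) \<le> min 1 (2 * (1 - (\<Prod>k<n. a k)))"
  using assms
proof (induction n)
  case 0
  then show ?case by simp
next
  case (Suc n)
  define T where "T = (\<Sum>i<n. if b i then prod_except a n i else 0)"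
  define P where "P = (\<Prod>k<n. a k)"
  have IH: "T \<le> 1" "T \<le> 2 * (1 - P)"
    using Suc unfolding T_def P_def by auto
  have "0 \<le> a k \<and> a k \<le> 1" if "k < n" for k
    using Suc.prems[of k] that by (cases "b k") auto
  then have P: "0 \<le> P" "P \<le> 1"
    unfolding P_def by (auto intro: prod_nonneg prod_le_1)
  have "(\<Sum>i<Suc n. if b i then prod_except a (Suc n) i else 0) = a n * T + (if b n then P else 0)"
    unfolding T_def P_def
    by (simp add: prod_except_Suc prod_except_last sum_distrib_left if_distrib cong: if_cong)
  moreover have "(\<Prod>k<Suc n. a k) = a n * P"
    unfolding P_def by simp
  moreover have "a n * T \<le> a n * (2 * (1 - P))" "a n * (2 * (1 - P)) \<le> 1/2 * (2 * (1 - P))"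
    "a n * P \<le> 1/2 * 1" if "0 \<le> a n" "a n \<le> 1/2"
    using IH P that by (intro mult_left_mono mult_right_mono mult_mono; simp)+
  ultimately show ?case
    using Suc.prems(1,2)[of n] IH P by (cases "b n") (auto simp: algebra_simps)
qed

text \<open>Averaging a symmetric weight over the \<open>N + 1\<close> transpositions that move each position to the
  last one.\<close>

lemma symmetric_weighted_sum_nonpos:
  fixes q g :: "nat list \<Rightarrow> real"
  assumes q_sym: "\<And>s js. s permutes {..<Suc N} \<Longrightarrow> js \<in> lists_of_len A (Suc N) \<Longrightarrow> q (permute_list s js) = q js"
    and q_nonneg: "\<And>js. js \<in> lists_of_len A (Suc N) \<Longrightarrow> 0 \<le> q js"
    and g_avg: "\<And>js. js \<in> lists_of_len A (Suc N) \<Longrightarrow>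
      (\<Sum>i<Suc N. g (permute_list (Transposition.transpose i N) js)) \<le> 0"
  shows "(\<Sum>js\<in>lists_of_len A (Suc N). q js * g js) \<le> 0"
proof -
  let ?L = "lists_of_len A (Suc N)" and ?t = "\<lambda>i. Transposition.transpose i N"
  have each: "(\<Sum>js\<in>?L. q js * g js) = (\<Sum>js\<in>?L. q js * g (permute_list (?t i) js))"
    if i: "i < Suc N" for i
  proof -
    have t: "?t i permutes {..<Suc N}"
      using i by (intro permutes_swap_id) auto
    have "(\<Sum>js\<in>?L. q js * g js) = (\<Sum>js\<in>?L. q (permute_list (?t i) js) * g (permute_list (?t i) js))"
      by (rule sum.reindex_bij_betw[OF bij_betw_permute_list_lists_of_len[OF t], symmetric])
    also have "\<dots> = (\<Sum>js\<in>?L. q js * g (permute_list (?t i) js))"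
      using q_sym t by (intro sum.cong refl) auto
    finally show ?thesis .
  qed
  have "real (Suc N) * (\<Sum>js\<in>?L. q js * g js) = (\<Sum>i<Suc N. \<Sum>js\<in>?L. q js * g js)"
    by simp
  also have "\<dots> = (\<Sum>i<Suc N. \<Sum>js\<in>?L. q js * g (permute_list (?t i) js))"
    by (intro sum.cong refl each) simp
  also have "\<dots> = (\<Sum>js\<in>?L. \<Sum>i<Suc N. q js * g (permute_list (?t i) js))"
    by (rule sum.swap)
  also have "\<dots> = (\<Sum>js\<in>?L. q js * (\<Sum>i<Suc N. g (permute_list (?t i) js)))"
    by (simp only: sum_distrib_left)
  also have "\<dots> \<le> 0"
    by (rule sum_nonpos, rule mult_nonneg_nonpos[OF q_nonneg g_avg])
  finally show ?thesis
    by (simp add: mult_le_0_iff)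
qed

lemma nth_permute_list_transpose_last:
  assumes "length js = Suc N" "i < Suc N" "k < Suc N"
  shows "permute_list (Transposition.transpose i N) js ! k = js ! Transposition.transpose i N k"
proof -
  have "Transposition.transpose i N permutes {..<length js}"
    using assms by (intro permutes_swap_id) auto
  then show ?thesis
    using assms by (simp add: permute_list_nth)
qed

lemma prod_permute_list_transpose_last:
  assumes len: "length js = Suc N" and i: "i < Suc N"
  shows "(\<Prod>k<N. lam (permute_list (Transposition.transpose i N) js ! k)) =
    prod_except (\<lambda>k. lam (js ! k)) (Suc N) i"
proof -
  let ?t = "Transposition.transpose i N"
  define h where "h m = (if m = i then 1 else lam (js ! m))" for m
  have t: "?t permutes {..<Suc N}"
    using i by (intro permutes_swap_id) auto
  have "(\<Prod>k<N. lam (permute_list ?t js ! k)) = (\<Prod>k<Suc N. if k = N then 1 else lam (js ! ?t k))"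
    using nth_permute_list_transpose_last[OF len i] by (simp add: lessThan_Suc)
  also have "\<dots> = (\<Prod>k<Suc N. h (?t k))"
    unfolding h_def by (intro prod.cong refl) (auto simp: Transposition.transpose_def)
  also have "\<dots> = (\<Prod>k<Suc N. h k)"
    using prod.permute[OF t, of h] by (simp add: comp_def)
  finally show ?thesis
    unfolding prod_except_def h_def .
qed

context
  fixes q :: "nat list \<Rightarrow> real" and lam :: "nat \<Rightarrow> real" and N D :: nat and beta :: real
  assumes q_sym: "\<And>s js. s permutes {..<Suc N} \<Longrightarrow> js \<in> lists_of_len {..<D} (Suc N) \<Longrightarrow>
      q (permute_list s js) = q js"
    and q_nonneg: "\<And>js. js \<in> lists_of_len {..<D} (Suc N) \<Longrightarrow> 0 \<le> q js"
    and q_sum: "(\<Sum>js\<in>lists_of_len {..<D} (Suc N). q js) = 1"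
    and lam_0: "lam 0 = 1"
    and lam_bounds: "\<And>j. j < D \<Longrightarrow> j \<noteq> 0 \<Longrightarrow> 0 \<le> lam j \<and> lam j \<le> beta"
    and beta_lt_1: "beta < 1"
begin

lemma lam_nth_bounds:
  assumes "js \<in> lists_of_len {..<D} (Suc N)" "k < Suc N"
  shows "0 \<le> lam (js ! k) \<and> lam (js ! k) \<le> 1"
  using lists_of_len_nth[OF assms] lam_bounds[of "js ! k"] lam_0 beta_lt_1
  by (cases "js ! k = 0") auto

lemma weight_permute_list_transpose:
  assumes "js \<in> lists_of_len {..<D} (Suc N)" "i < Suc N"
  shows "(if permute_list (Transposition.transpose i N) js ! N \<noteq> 0
      then \<Prod>k<N. lam (permute_list (Transposition.transpose i N) js ! k) else 0) =
    (if js ! i \<noteq> 0 then prod_except (\<lambda>k. lam (js ! k)) (Suc N) i else 0)"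
    and "(\<Prod>k<N. lam (permute_list (Transposition.transpose i N) js ! k)) =
    prod_except (\<lambda>k. lam (js ! k)) (Suc N) i"
proof -
  have len: "length js = Suc N"
    using assms(1) unfolding lists_of_len_def by simp
  show "(\<Prod>k<N. lam (permute_list (Transposition.transpose i N) js ! k)) =
      prod_except (\<lambda>k. lam (js ! k)) (Suc N) i"
    by (rule prod_permute_list_transpose_last[OF len assms(2)])
  moreover have "permute_list (Transposition.transpose i N) js ! N = js ! i"
    using nth_permute_list_transpose_last[OF len assms(2), of N] by simp
  ultimately show "(if permute_list (Transposition.transpose i N) js ! N \<noteq> 0
      then \<Prod>k<N. lam (permute_list (Transposition.transpose i N) js ! k) else 0) =
    (if js ! i \<noteq> 0 then prod_except (\<lambda>k. lam (js ! k)) (Suc N) i else 0)"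
    by simp
qed

lemma expectation_gap_bound:
  "real N * (1 - beta) *
      (\<Sum>js\<in>lists_of_len {..<D} (Suc N). q js * (if js ! N \<noteq> 0 then \<Prod>k<N. lam (js ! k) else 0))
    + (\<Sum>js\<in>lists_of_len {..<D} (Suc N). q js * (\<Prod>k<N. lam (js ! k))) \<le> 1"
proof -
  let ?L = "lists_of_len {..<D} (Suc N)"
  define g where "g js = real N * (1 - beta) * (if js ! N \<noteq> 0 then \<Prod>k<N. lam (js ! k) else 0)
    + (\<Prod>k<N. lam (js ! k)) - 1" for js
  have "(\<Sum>js\<in>?L. q js * g js) \<le> 0"
  proof (rule symmetric_weighted_sum_nonpos[OF q_sym q_nonneg])
    fix js assume js: "js \<in> ?L"
    let ?E = "prod_except (\<lambda>k. lam (js ! k)) (Suc N)"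
    have "(\<Sum>i<Suc N. g (permute_list (Transposition.transpose i N) js))
        = (\<Sum>i<Suc N. real N * (1 - beta) * (if js ! i \<noteq> 0 then ?E i else 0) + ?E i - 1)"
      unfolding g_def using weight_permute_list_transpose[OF js] by (intro sum.cong refl) simp
    also have "\<dots> = (\<Sum>i<Suc N. real N * (1 - beta) * (if js ! i \<noteq> 0 then ?E i else 0) + ?E i)
        - (real N + 1)"
      by (simp add: sum_subtractf)
    also have "\<dots> \<le> 0"
      using sum_prod_except_marked_gap_le[of N "\<lambda>k. lam (js ! k)" "\<lambda>k. js ! k \<noteq> 0" beta]
        lam_nth_bounds[OF js] lam_bounds lists_of_len_nth[OF js] by simp
    finally show "(\<Sum>i<Suc N. g (permute_list (Transposition.transpose i N) js)) \<le> 0" .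
  qed
  then show ?thesis
    unfolding g_def by (simp add: algebra_simps sum.distrib sum_subtractf sum_distrib_left q_sum)
qed

lemma expectation_half_bound:
  assumes "beta \<le> 1/2"
  shows "(real N + 1) *
    (\<Sum>js\<in>lists_of_len {..<D} (Suc N). q js * (if js ! N \<noteq> 0 then \<Prod>k<N. lam (js ! k) else 0)) \<le> 1"
proof -
  let ?L = "lists_of_len {..<D} (Suc N)"
  define g where "g js = (real N + 1) * (if js ! N \<noteq> 0 then \<Prod>k<N. lam (js ! k) else 0) - 1" for js
  have "(\<Sum>js\<in>?L. q js * g js) \<le> 0"
  proof (rule symmetric_weighted_sum_nonpos[OF q_sym q_nonneg])
    fix js assume js: "js \<in> ?L"
    let ?E = "prod_except (\<lambda>k. lam (js ! k)) (Suc N)"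
    have "(\<Sum>i<Suc N. g (permute_list (Transposition.transpose i N) js))
        = (\<Sum>i<Suc N. (real N + 1) * (if js ! i \<noteq> 0 then ?E i else 0) - 1)"
      unfolding g_def using weight_permute_list_transpose(1)[OF js] by (intro sum.cong refl) simp
    also have "\<dots> = (real N + 1) * ((\<Sum>i<Suc N. if js ! i \<noteq> 0 then ?E i else 0) - 1)"
      by (simp only: sum_subtractf sum_distrib_left[symmetric]) (simp add: right_diff_distrib)
    also have "\<dots> \<le> 0"
    proof -
      have marked: "0 \<le> lam (js ! k) \<and> lam (js ! k) \<le> 1/2" if "k < Suc N" "js ! k \<noteq> 0" for k
        using lam_bounds[of "js ! k"] lists_of_len_nth[OF js that(1)] that(2) assms by auto
      have unmarked: "lam (js ! k) = 1" if "k < Suc N" "\<not> js ! k \<noteq> 0" for k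
        using lam_0 that(2) by simp
      have "(\<Sum>i<Suc N. if js ! i \<noteq> 0 then ?E i else 0) \<le> min 1 (2 * (1 - (\<Prod>k<Suc N. lam (js ! k))))"
        by (rule sum_prod_except_marked_le[OF marked unmarked])
      then show ?thesis
        by (simp add: mult_le_0_iff)
    qed
    finally show "(\<Sum>i<Suc N. g (permute_list (Transposition.transpose i N) js)) \<le> 0" .
  qed
  then show ?thesis
    unfolding g_def by (simp add: algebra_simps sum_subtractf sum_distrib_left q_sum)
qed

end

section \<open>The acceptance probabilities in an eigenbasis of the verification operator\<close>

lemma verification_op_eigenbasis:
  fixes Om :: "'a::finite op"
  assumes psi: "cinner psi psi = 1" and vo: "verification_op Om psi"
    and beta: "second_largest_eigenvalue Om beta"
  obtains u l where "orthonormal u CARD('a)" "eigenpairs Om u l CARD('a)" "u 0 = psi" "l 0 = 1"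
    "\<And>j. j < CARD('a) \<Longrightarrow> j \<noteq> 0 \<Longrightarrow> 0 \<le> l j \<and> l j \<le> beta"
proof -
  have psd: "psd_on UNIV Om" and fix_psi: "mat_vec Om psi = psi"
    and simple: "\<And>v. mat_vec Om v = v \<Longrightarrow> \<exists>c. v = (\<lambda>i. c * psi i)"
    using vo unfolding verification_op_def by auto
  obtain u l where ul: "orthonormal u CARD('a)" "eigenpairs Om u l CARD('a)" "u 0 = psi" "l 0 = 1"
    using hermitian_eigenbasis[OF psd_on_UNIV_hermitian[OF psd] psi fix_psi] .
  have "0 \<le> l j \<and> l j \<le> beta" if j: "j < CARD('a)" "j \<noteq> 0" for j
  proof -
    have unit: "cinner (u j) (u j) = 1" and perp: "cinner psi (u j) = 0"
      using ul(1,3) j unfolding orthonormal_def by auto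
    have ev: "mat_vec Om (u j) = (\<lambda>a. of_real (l j) * u j a)"
      using ul(2) j unfolding eigenpairs_def by simp
    have "0 \<le> l j"
      using psd_on_UNIV_cinner_nonneg[OF psd, of "u j"] unfolding ev cinner_scale_right unit by simp
    moreover have "u j \<noteq> (\<lambda>_. 0)"
      using unit by (auto simp: cinner_def)
    moreover have "l j \<noteq> 1"
    proof
      assume "l j = 1"
      then obtain c where c: "u j = (\<lambda>i. c * psi i)"
        using simple ev by auto
      then have "c = 0"
        using perp psi by (simp add: cinner_scale_right)
      then show False
        using unit c by (simp add: cinner_def)
    qed
    ultimately show ?thesis
      using beta ev unfolding second_largest_eigenvalue_def is_eigenvalue_def by blast
  qed
  then show ?thesis
    using that ul by blast
qed

lemma nth_replicate_append_last: "k < Suc N \<Longrightarrow> (replicate N A @ [B]) ! k = (if k < N then A else B)"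
  by (auto simp: nth_append less_Suc_eq)

lemma acceptance_in_eigenbasis:
  fixes Om :: "'a::finite op" and rho :: "'a list op" and N :: nat
  assumes u: "orthonormal u CARD('a)" and eig: "eigenpairs Om u l CARD('a)" and psi: "u 0 = psi"
  defines "L \<equiv> lists_of_len {..<CARD('a)} (Suc N)"
  shows "p_rho N Om rho = (\<Sum>js\<in>L. basis_weight u (Suc N) rho js * (\<Prod>k<N. l (js ! k)))"
    and "p_rho N Om rho - f_rho N Om psi rho =
      (\<Sum>js\<in>L. basis_weight u (Suc N) rho js * (if js ! N \<noteq> 0 then \<Prod>k<N. l (js ! k) else 0))"
proof -
  let ?q = "basis_weight u (Suc N) rho"
  note expansion = eigenbasis_expansion[OF u]
  have id_diag: "id_op x y = (\<Sum>j<CARD('a). of_real 1 * u j x * cnj (u j y))" for x y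
    using expansion[OF eigenpairs_id_op] by simp
  have proj_diag: "proj_op psi x y = (\<Sum>j<CARD('a). of_real (if j = 0 then 1 else 0) * u j x * cnj (u j y))"
    for x y
    using expansion[OF eigenpairs_proj_op[OF u]] psi by simp
  have p: "p_rho N Om rho = (\<Sum>js\<in>L. (\<Prod>k<Suc N. (if k < N then l (js ! k) else 1)) * ?q js)"
    unfolding p_rho_def Suc_eq_plus1[symmetric] L_def
    by (rule tr_prod_tensor_ops_diagonal[where c = "\<lambda>k j. if k < N then l j else 1"])
      (simp_all add: nth_replicate_append_last expansion[OF eig] id_diag)
  have f: "f_rho N Om psi rho =
      (\<Sum>js\<in>L. (\<Prod>k<Suc N. (if k < N then l (js ! k) else if js ! k = 0 then 1 else 0)) * ?q js)"
    unfolding f_rho_def Suc_eq_plus1[symmetric] L_def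
    by (rule tr_prod_tensor_ops_diagonal[where c = "\<lambda>k j. if k < N then l j else if j = 0 then 1 else 0"])
      (simp_all add: nth_replicate_append_last expansion[OF eig] proj_diag)
  show "p_rho N Om rho = (\<Sum>js\<in>L. ?q js * (\<Prod>k<N. l (js ! k)))"
    unfolding p by (simp add: mult.commute)
  show "p_rho N Om rho - f_rho N Om psi rho =
      (\<Sum>js\<in>L. ?q js * (if js ! N \<noteq> 0 then \<Prod>k<N. l (js ! k) else 0))"
    unfolding p f sum_subtractf[symmetric] by (intro sum.cong refl) (simp add: algebra_simps)
qed

lemma acceptance_bounds:
  fixes Om :: "'a::finite op" and rho :: "'a list op"
  assumes psi: "cinner psi psi = 1" and vo: "verification_op Om psi"
    and beta: "second_largest_eigenvalue Om beta" and beta_lt_1: "beta < 1"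
    and rho: "density_op (Suc N) rho" and sym: "perm_invariant (Suc N) rho"
  shows acceptance_gap_bound:
      "real N * (1 - beta) * (p_rho N Om rho - f_rho N Om psi rho) + p_rho N Om rho \<le> 1"
    and acceptance_half_bound:
      "beta \<le> 1/2 \<Longrightarrow> (real N + 1) * (p_rho N Om rho - f_rho N Om psi rho) \<le> 1"
proof -
  obtain u l where u: "orthonormal u CARD('a)" and eig: "eigenpairs Om u l CARD('a)"
    and psi_u: "u 0 = psi" and l: "l 0 = 1" "\<And>j. j < CARD('a) \<Longrightarrow> j \<noteq> 0 \<Longrightarrow> 0 \<le> l j \<and> l j \<le> beta"
    using verification_op_eigenbasis[OF psi vo beta] by blast
  let ?q = "basis_weight u (Suc N) rho" and ?L = "lists_of_len {..<CARD('a)} (Suc N)"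
  have q_sym: "?q (permute_list s js) = ?q js" if "s permutes {..<Suc N}" "js \<in> ?L" for s js
    using basis_weight_permute_list[OF sym that(1)] that(2) unfolding lists_of_len_def by blast
  have q_nonneg: "0 \<le> ?q js" for js
    by (rule basis_weight_nonneg[OF rho])
  have q_sum: "(\<Sum>js\<in>?L. ?q js) = 1"
    by (rule basis_weight_sum[OF rho u])
  note pf = acceptance_in_eigenbasis[OF u eig psi_u, of N rho]
  show "real N * (1 - beta) * (p_rho N Om rho - f_rho N Om psi rho) + p_rho N Om rho \<le> 1"
    using expectation_gap_bound[where D = "CARD('a)" and q = ?q and lam = l, OF q_sym q_nonneg q_sum l beta_lt_1]
    unfolding pf(2)[symmetric] pf(1)[symmetric] .
  show "(real N + 1) * (p_rho N Om rho - f_rho N Om psi rho) \<le> 1" if "beta \<le> 1/2"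
    using expectation_half_bound[where D = "CARD('a)" and q = ?q and lam = l, OF q_sym q_nonneg q_sum l beta_lt_1 that]
    unfolding pf(2)[symmetric] .
qed

section \<open>Symmetric states attaining the bounds\<close>

definition prod_vec :: "nat \<Rightarrow> (nat \<Rightarrow> 'b \<Rightarrow> complex) \<Rightarrow> 'b list \<Rightarrow> complex" where
  "prod_vec n w xs = (\<Prod>k<n. w k (xs ! k))"

definition excited_at :: "('b \<Rightarrow> complex) \<Rightarrow> ('b \<Rightarrow> complex) \<Rightarrow> nat \<Rightarrow> nat \<Rightarrow> 'b \<Rightarrow> complex" where
  "excited_at psi v l k = (if k = l then v else psi)"

definition sym_excitation :: "('b \<Rightarrow> complex) \<Rightarrow> ('b \<Rightarrow> complex) \<Rightarrow> nat \<Rightarrow> 'b list op" where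
  "sym_excitation psi v n = (\<lambda>xs ys. \<Sum>l<n. of_real (1 / real n) *
     (prod_vec n (excited_at psi v l) xs * cnj (prod_vec n (excited_at psi v l) ys)))"

definition mix_op :: "real \<Rightarrow> 'b list op \<Rightarrow> 'b list op \<Rightarrow> 'b list op" where
  "mix_op t r1 r2 = (\<lambda>xs ys. of_real t * r1 xs ys + of_real (1 - t) * r2 xs ys)"

lemma prod_vec_norm:
  fixes w :: "nat \<Rightarrow> 'b::finite \<Rightarrow> complex"
  shows "(\<Sum>xs\<in>idx n. prod_vec n w xs * cnj (prod_vec n w xs)) = (\<Prod>k<n. cinner (w k) (w k))"
proof -
  have "(\<Sum>xs\<in>idx n. prod_vec n w xs * cnj (prod_vec n w xs)) =
      (\<Sum>xs\<in>idx n. \<Prod>k<n. w k (xs ! k) * cnj (w k (xs ! k)))"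
    unfolding prod_vec_def by (simp add: prod.distrib cnj_prod)
  also have "\<dots> = (\<Prod>k<n. \<Sum>a\<in>UNIV. w k a * cnj (w k a))"
    by (rule sum_idx_prod)
  finally show ?thesis
    unfolding cinner_def by (simp add: mult.commute)
qed

lemma tr_prod_prod_vec:
  fixes w :: "nat \<Rightarrow> 'b::finite \<Rightarrow> complex" and As :: "'b op list"
  assumes len: "length As = n"
  shows "tr_prod n (tensor_ops As) (\<lambda>xs ys. prod_vec n w xs * cnj (prod_vec n w ys)) =
    Re (\<Prod>k<n. cinner (w k) (mat_vec (As ! k) (w k)))"
proof -
  define F where "F k a b = (As ! k) a b * (w k b * cnj (w k a))" for k a b
  have "(\<Sum>xs\<in>idx n. \<Sum>ys\<in>idx n. tensor_ops As xs ys * (prod_vec n w ys * cnj (prod_vec n w xs)))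
      = (\<Sum>xs\<in>idx n. \<Sum>ys\<in>idx n. \<Prod>k<n. F k (xs ! k) (ys ! k))"
    unfolding tensor_ops_def prod_vec_def F_def len by (simp add: prod.distrib cnj_prod)
  also have "\<dots> = (\<Sum>xs\<in>idx n. \<Prod>k<n. \<Sum>b\<in>UNIV. F k (xs ! k) b)"
    by (rule sum.cong[OF refl], rule sum_idx_prod)
  also have "\<dots> = (\<Prod>k<n. \<Sum>a\<in>UNIV. \<Sum>b\<in>UNIV. F k a b)"
    by (rule sum_idx_prod)
  also have "\<dots> = (\<Prod>k<n. cinner (w k) (mat_vec (As ! k) (w k)))"
    unfolding cinner_def mat_vec_def F_def by (simp add: sum_distrib_left mult_ac)
  finally show ?thesis
    unfolding tr_prod_def by (simp add: mult_ac)
qed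

lemma tr_prod_sum:
  "tr_prod n A (\<lambda>xs ys. \<Sum>l\<in>S. of_real (c l) * R l xs ys) = (\<Sum>l\<in>S. c l * tr_prod n A (R l))"
proof -
  have "(\<Sum>xs\<in>idx n. \<Sum>ys\<in>idx n. A xs ys * (\<Sum>l\<in>S. of_real (c l) * R l ys xs))
      = (\<Sum>xs\<in>idx n. \<Sum>ys\<in>idx n. \<Sum>l\<in>S. of_real (c l) * (A xs ys * R l ys xs))"
    by (simp add: sum_distrib_left mult_ac)
  also have "\<dots> = (\<Sum>l\<in>S. \<Sum>xs\<in>idx n. \<Sum>ys\<in>idx n. of_real (c l) * (A xs ys * R l ys xs))"
    by (subst (2) sum.swap, subst sum.swap, rule refl)
  also have "\<dots> = (\<Sum>l\<in>S. of_real (c l) * (\<Sum>xs\<in>idx n. \<Sum>ys\<in>idx n. A xs ys * R l ys xs))"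
    by (simp add: sum_distrib_left)
  finally show ?thesis
    unfolding tr_prod_def by (simp add: Re_sum)
qed

lemma tr_prod_lincomb:
  "tr_prod n A (\<lambda>xs ys. of_real a * R1 xs ys + of_real b * R2 xs ys) = a * tr_prod n A R1 + b * tr_prod n A R2"
  unfolding tr_prod_def by (simp add: algebra_simps sum.distrib sum_distrib_left)

lemma tr_prod_mix_op: "tr_prod n A (mix_op t R1 R2) = t * tr_prod n A R1 + (1 - t) * tr_prod n A R2"
  unfolding mix_op_def by (rule tr_prod_lincomb)

lemma psd_on_sum_rank_one:
  fixes F :: "'l \<Rightarrow> 'b \<Rightarrow> complex"
  assumes "\<And>l. l \<in> S \<Longrightarrow> 0 \<le> c l"
  shows "psd_on I (\<lambda>xs ys. \<Sum>l\<in>S. of_real (c l) * (F l xs * cnj (F l ys)))"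
  unfolding psd_on_def
proof (intro conjI allI ballI)
  fix i j
  show "(\<Sum>l\<in>S. of_real (c l) * (F l j * cnj (F l i))) = cnj (\<Sum>l\<in>S. of_real (c l) * (F l i * cnj (F l j)))"
    by (simp add: mult_ac)
next
  fix v :: "'b \<Rightarrow> complex"
  define z where "z l = (\<Sum>i\<in>I. cnj (v i) * F l i)" for l
  have "(\<Sum>i\<in>I. \<Sum>j\<in>I. cnj (v i) * (\<Sum>l\<in>S. of_real (c l) * (F l i * cnj (F l j))) * v j)
      = (\<Sum>i\<in>I. \<Sum>j\<in>I. \<Sum>l\<in>S. of_real (c l) * ((cnj (v i) * F l i) * cnj (cnj (v j) * F l j)))"
    by (simp add: sum_distrib_left sum_distrib_right mult_ac)
  also have "\<dots> = (\<Sum>l\<in>S. \<Sum>i\<in>I. \<Sum>j\<in>I. of_real (c l) * ((cnj (v i) * F l i) * cnj (cnj (v j) * F l j)))"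
    by (subst (2) sum.swap, subst sum.swap, rule refl)
  also have "\<dots> = (\<Sum>l\<in>S. of_real (c l) * (z l * cnj (z l)))"
    unfolding z_def by (simp add: sum_distrib_left sum_distrib_right mult_ac)
  also have "\<dots> = of_real (\<Sum>l\<in>S. c l * (cmod (z l))\<^sup>2)"
    unfolding of_real_sum
    by (rule sum.cong[OF refl]) (simp add: complex_norm_square[symmetric] flip: of_real_power)
  finally have eq: "(\<Sum>i\<in>I. \<Sum>j\<in>I. cnj (v i) * (\<Sum>l\<in>S. of_real (c l) * (F l i * cnj (F l j))) * v j)
      = of_real (\<Sum>l\<in>S. c l * (cmod (z l))\<^sup>2)" .
  have "0 \<le> (\<Sum>l\<in>S. c l * (cmod (z l))\<^sup>2)"
    using assms by (intro sum_nonneg) auto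
  then show "0 \<le> Re (\<Sum>i\<in>I. \<Sum>j\<in>I. cnj (v i) * (\<Sum>l\<in>S. of_real (c l) * (F l i * cnj (F l j))) * v j)"
    unfolding eq by simp
qed

lemma sym_excitation_density:
  fixes psi v :: "'b::finite \<Rightarrow> complex"
  assumes "cinner psi psi = 1" "cinner v v = 1" "n \<ge> 1"
  shows "density_op n (sym_excitation psi v n)"
  unfolding density_op_def
proof
  show "psd_on (idx n) (sym_excitation psi v n)"
    unfolding sym_excitation_def by (rule psd_on_sum_rank_one) simp
  have "(\<Sum>xs\<in>idx n. sym_excitation psi v n xs xs) = (\<Sum>l<n. \<Sum>xs\<in>idx n.
      of_real (1 / real n) * (prod_vec n (excited_at psi v l) xs * cnj (prod_vec n (excited_at psi v l) xs)))"
    unfolding sym_excitation_def by (rule sum.swap)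
  also have "\<dots> = (\<Sum>l<n. of_real (1 / real n) * (\<Prod>k<n. cinner (excited_at psi v l k) (excited_at psi v l k)))"
    by (simp add: sum_divide_distrib[symmetric] prod_vec_norm)
  also have "\<dots> = (\<Sum>l<n. of_real (1 / real n))"
  proof -
    have "cinner (excited_at psi v l k) (excited_at psi v l k) = 1" for l k
      using assms by (simp add: excited_at_def)
    then show ?thesis by simp
  qed
  also have "\<dots> = 1"
    using assms by simp
  finally show "(\<Sum>xs\<in>idx n. sym_excitation psi v n xs xs) = 1" .
qed

lemma prod_vec_permute_list:
  assumes s: "s permutes {..<n}" and len: "length xs = n"
  shows "prod_vec n (excited_at psi v l) (permute_list s xs) = prod_vec n (excited_at psi v (s l)) xs"
proof -
  have "prod_vec n (excited_at psi v l) (permute_list s xs) = (\<Prod>k<n. excited_at psi v (s l) (s k) (xs ! s k))"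
    unfolding prod_vec_def using s len permutes_inj[OF s]
    by (intro prod.cong refl) (auto simp: permute_list_nth excited_at_def inj_eq)
  also have "\<dots> = prod_vec n (excited_at psi v (s l)) xs"
    unfolding prod_vec_def using prod.permute[OF s, of "\<lambda>m. excited_at psi v (s l) m (xs ! m)"]
    by (simp add: comp_def)
  finally show ?thesis .
qed

lemma sym_excitation_perm_invariant:
  fixes psi v :: "'b \<Rightarrow> complex"
  shows "perm_invariant n (sym_excitation psi v n)"
  unfolding perm_invariant_def
proof (intro allI impI ballI)
  fix s and xs ys :: "'b list"
  assume s: "s permutes {..<n}" and xs: "xs \<in> idx n" and ys: "ys \<in> idx n"
  define h where "h l = of_real (1 / real n) *
    (prod_vec n (excited_at psi v l) xs * cnj (prod_vec n (excited_at psi v l) ys))" for l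
  have "sym_excitation psi v n (permute_list s xs) (permute_list s ys) = (\<Sum>l<n. h (s l))"
    unfolding sym_excitation_def h_def using xs ys s by (simp add: prod_vec_permute_list idx_def)
  also have "\<dots> = (\<Sum>l<n. h l)"
    using sum.permute[OF s, of h] by (simp add: comp_def)
  finally show "sym_excitation psi v n (permute_list s xs) (permute_list s ys) = sym_excitation psi v n xs ys"
    unfolding sym_excitation_def h_def .
qed

lemma sym_excitation_tr_prod:
  fixes As :: "'b::finite op list"
  assumes "length As = n"
  shows "tr_prod n (tensor_ops As) (sym_excitation psi v n) =
    (\<Sum>l<n. (1 / real n) * Re (\<Prod>k<n. cinner (excited_at psi v l k) (mat_vec (As ! k) (excited_at psi v l k))))"
  unfolding sym_excitation_def tr_prod_sum tr_prod_prod_vec[OF assms] ..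

lemma sum_lessThan_Suc_if_less:
  fixes c x y :: real
  shows "(\<Sum>l<Suc N. c * (if l < N then x else y)) = c * (real N * x + y)"
proof -
  have "(\<Sum>l<N. c * (if l < N then x else y)) = (\<Sum>l<N. c * x)"
    by (rule sum.cong) auto
  then show ?thesis
    by (simp add: algebra_simps)
qed

lemma sym_excitation_tr_prod_last:
  fixes psi v :: "'b::finite \<Rightarrow> complex" and Om :: "'b op"
  assumes "mat_vec Om psi = psi" "mat_vec Om v = (\<lambda>a. of_real mu * v a)"
    and "cinner psi psi = 1" "cinner v v = 1"
  shows "tr_prod (Suc N) (tensor_ops (replicate N Om @ [B])) (sym_excitation psi v (Suc N)) =
    (\<Sum>l<Suc N. (1 / real (Suc N)) * Re ((if l < N then of_real mu else 1) *
      cinner (excited_at psi v l N) (mat_vec B (excited_at psi v l N))))"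
proof -
  have len: "length (replicate N Om @ [B]) = Suc N"
    by simp
  have "cinner (excited_at psi v l k) (mat_vec Om (excited_at psi v l k)) = (if k = l then of_real mu else 1)"
    for l k
    using assms by (simp add: excited_at_def cinner_scale_right)
  then have "(\<Prod>k<Suc N. cinner (excited_at psi v l k)
      (mat_vec ((replicate N Om @ [B]) ! k) (excited_at psi v l k))) =
    (if l < N then of_real mu else 1) * cinner (excited_at psi v l N) (mat_vec B (excited_at psi v l N))" for l
    by (simp add: nth_append prod.delta)
  then show ?thesis
    unfolding sym_excitation_tr_prod[OF len] by simp
qed

lemma sym_excitation_acceptance:
  fixes psi v :: "'b::finite \<Rightarrow> complex" and Om :: "'b op"
  assumes psi: "cinner psi psi = 1" "mat_vec Om psi = psi"
    and v: "cinner v v = 1" "mat_vec Om v = (\<lambda>a. of_real mu * v a)"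
  shows "p_rho N Om (sym_excitation psi v (Suc N)) = (real N * mu + 1) / (real N + 1)"
    and "f_rho N Om psi (sym_excitation psi v (Suc N)) = (real N * mu + (cmod (cinner psi v))\<^sup>2) / (real N + 1)"
proof -
  note tr = sym_excitation_tr_prod_last[OF psi(2) v(2) psi(1) v(1)]
  have "p_rho N Om (sym_excitation psi v (Suc N)) = (\<Sum>l<Suc N. (1 / real (Suc N)) * (if l < N then mu else 1))"
    unfolding p_rho_def Suc_eq_plus1[symmetric] tr
    using psi v by (intro sum.cong refl) (auto simp: mat_vec_id_op excited_at_def)
  then show "p_rho N Om (sym_excitation psi v (Suc N)) = (real N * mu + 1) / (real N + 1)"
    unfolding sum_lessThan_Suc_if_less by simp
  have "cinner v (\<lambda>a. cinner psi v * psi a) = cinner psi v * cinner v psi"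
    by (rule cinner_scale_right)
  also have "\<dots> = of_real ((cmod (cinner psi v))\<^sup>2)"
    unfolding cinner_swap[of v psi] complex_norm_square ..
  finally have "Re (cinner v (\<lambda>a. cinner psi v * psi a)) = (cmod (cinner psi v))\<^sup>2"
    by simp
  then have "f_rho N Om psi (sym_excitation psi v (Suc N)) =
      (\<Sum>l<Suc N. (1 / real (Suc N)) * (if l < N then mu else (cmod (cinner psi v))\<^sup>2))"
    unfolding f_rho_def Suc_eq_plus1[symmetric] tr
    using psi v by (intro sum.cong refl) (auto simp: mat_vec_proj_op excited_at_def)
  then show "f_rho N Om psi (sym_excitation psi v (Suc N)) =
      (real N * mu + (cmod (cinner psi v))\<^sup>2) / (real N + 1)"
    unfolding sum_lessThan_Suc_if_less by simp
qed

lemma psd_on_lincomb: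
  fixes R1 R2 :: "'b \<Rightarrow> 'b \<Rightarrow> complex"
  assumes "psd_on I R1" "psd_on I R2" "0 \<le> a" "0 \<le> b"
  shows "psd_on I (\<lambda>xs ys. of_real a * R1 xs ys + of_real b * R2 xs ys)"
  unfolding psd_on_def
proof (intro conjI allI ballI)
  fix i j assume "i \<in> I" "j \<in> I"
  then have "R1 j i = cnj (R1 i j)" "R2 j i = cnj (R2 i j)"
    using assms unfolding psd_on_def by blast+
  then show "of_real a * R1 j i + of_real b * R2 j i = cnj (of_real a * R1 i j + of_real b * R2 i j)"
    by simp
next
  fix v :: "'b \<Rightarrow> complex"
  have "0 \<le> Re (\<Sum>i\<in>I. \<Sum>j\<in>I. cnj (v i) * R1 i j * v j)" "0 \<le> Re (\<Sum>i\<in>I. \<Sum>j\<in>I. cnj (v i) * R2 i j * v j)"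
    using assms(1,2) unfolding psd_on_def by blast+
  moreover have "(\<Sum>i\<in>I. \<Sum>j\<in>I. cnj (v i) * (of_real a * R1 i j + of_real b * R2 i j) * v j)
     = of_real a * (\<Sum>i\<in>I. \<Sum>j\<in>I. cnj (v i) * R1 i j * v j) + of_real b * (\<Sum>i\<in>I. \<Sum>j\<in>I. cnj (v i) * R2 i j * v j)"
    by (simp add: algebra_simps sum.distrib sum_distrib_left)
  ultimately show "0 \<le> Re (\<Sum>i\<in>I. \<Sum>j\<in>I. cnj (v i) * (of_real a * R1 i j + of_real b * R2 i j) * v j)"
    using assms(3,4) by simp
qed

lemma mix_op_density:
  assumes "density_op n r1" "density_op n r2" "0 \<le> t" "t \<le> 1"
  shows "density_op n (mix_op t r1 r2)"
  unfolding density_op_def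
proof
  show "psd_on (idx n) (mix_op t r1 r2)"
    unfolding mix_op_def using assms by (intro psd_on_lincomb) (auto simp: density_op_def)
  have "(\<Sum>xs\<in>idx n. mix_op t r1 r2 xs xs) =
      of_real t * (\<Sum>xs\<in>idx n. r1 xs xs) + of_real (1 - t) * (\<Sum>xs\<in>idx n. r2 xs xs)"
    unfolding mix_op_def by (simp add: sum.distrib sum_distrib_left)
  also have "\<dots> = 1"
    using assms unfolding density_op_def by (simp add: algebra_simps)
  finally show "(\<Sum>xs\<in>idx n. mix_op t r1 r2 xs xs) = 1" .
qed

lemma mix_op_perm_invariant:
  "perm_invariant n r1 \<Longrightarrow> perm_invariant n r2 \<Longrightarrow> perm_invariant n (mix_op t r1 r2)"
  unfolding perm_invariant_def mix_op_def by simp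

text \<open>Along the segment between two symmetric states, \<open>p\<close> and \<open>f\<close> are affine, so every value of
  \<open>p\<close> in between is attained and any affine relation between \<open>p\<close> and \<open>f\<close> shared by the endpoints
  persists. When \<open>p r1 = p r2\<close>, division by zero makes \<open>t = 0\<close>, which still works.\<close>

lemma mix_op_attains:
  assumes r1: "density_op (Suc N) r1" "perm_invariant (Suc N) r1"
    and r2: "density_op (Suc N) r2" "perm_invariant (Suc N) r2"
    and d: "p_rho N Om r2 \<le> d" "d \<le> p_rho N Om r1"
    and line: "K * (p_rho N Om r1 - f_rho N Om psi r1) + c * p_rho N Om r1 = e"
      "K * (p_rho N Om r2 - f_rho N Om psi r2) + c * p_rho N Om r2 = e"
  obtains rho where "density_op (Suc N) rho" "perm_invariant (Suc N) rho" "p_rho N Om rho = d"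
    "K * (p_rho N Om rho - f_rho N Om psi rho) + c * p_rho N Om rho = e"
proof -
  define t where "t = (d - p_rho N Om r2) / (p_rho N Om r1 - p_rho N Om r2)"
  have t: "0 \<le> t" "t \<le> 1"
    unfolding t_def using d by (auto simp: divide_le_eq_1)
  have p: "p_rho N Om (mix_op t r1 r2) = t * p_rho N Om r1 + (1 - t) * p_rho N Om r2"
    and f: "f_rho N Om psi (mix_op t r1 r2) = t * f_rho N Om psi r1 + (1 - t) * f_rho N Om psi r2"
    unfolding p_rho_def f_rho_def by (rule tr_prod_mix_op)+
  have "p_rho N Om (mix_op t r1 r2) = d"
  proof (cases "p_rho N Om r1 = p_rho N Om r2")
    case True
    then show ?thesis
      unfolding p using d by (simp add: algebra_simps)
  next
    case False
    then have "t * (p_rho N Om r1 - p_rho N Om r2) = d - p_rho N Om r2"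
      unfolding t_def by simp
    then show ?thesis
      unfolding p by (simp add: algebra_simps)
  qed
  moreover have "K * (p_rho N Om (mix_op t r1 r2) - f_rho N Om psi (mix_op t r1 r2))
      + c * p_rho N Om (mix_op t r1 r2) =
      t * (K * (p_rho N Om r1 - f_rho N Om psi r1) + c * p_rho N Om r1)
      + (1 - t) * (K * (p_rho N Om r2 - f_rho N Om psi r2) + c * p_rho N Om r2)"
    unfolding p f by (simp add: algebra_simps)
  ultimately show ?thesis
    using that mix_op_density[OF r1(1) r2(1) t] mix_op_perm_invariant[OF r1(2) r2(2)]
    unfolding line by (simp add: algebra_simps)
qed

lemma eigenvector_orthogonal_to_fixed:
  fixes Om :: "'a::finite op"
  assumes herm: "hermitian Om" and psi: "mat_vec Om psi = psi"
    and ev: "is_eigenvalue Om (complex_of_real m)" and m: "m \<noteq> 1"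
  obtains v where "cinner v v = 1" "cinner psi v = 0" "mat_vec Om v = (\<lambda>a. of_real m * v a)"
proof -
  obtain w where w: "w \<noteq> (\<lambda>_. 0)" "mat_vec Om w = (\<lambda>i. of_real m * w i)"
    using ev unfolding is_eigenvalue_def by blast
  define v where "v = normalize_vec w"
  have unit: "cinner v v = 1"
    unfolding v_def by (rule cinner_normalize_vec_self[OF w(1)])
  have eig: "mat_vec Om v = (\<lambda>a. of_real m * v a)"
    unfolding v_def normalize_vec_def mat_vec_scale w(2) by (simp add: mult_ac)
  have "of_real m * cinner psi v = cinner psi v"
    using cinner_mat_vec_hermitian[OF herm, of psi v] psi unfolding eig cinner_scale_right by simp
  then have "cinner psi v = 0"
    using m by (metis mult_cancel_right1 of_real_eq_1_iff)
  then show ?thesis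
    using that unit eig by blast
qed

section \<open>The bounds on the conditional fidelity\<close>

lemma ratio_ge_of_gap_bound:
  fixes d p f K :: real
  assumes "0 < d" "d \<le> p" "0 < K" "K * (p - f) + p \<le> 1"
  shows "1 - (1 - d) / (K * d) \<le> f / p"
proof -
  have "K * d * (p - f) \<le> d * (1 - p)"
    using assms(1,4) mult_left_mono[of "K * (p - f)" "1 - p" d] by (simp add: algebra_simps)
  also have "\<dots> \<le> (1 - d) * p"
    using assms(2) by (simp add: algebra_simps)
  finally have "(p - f) / p \<le> (1 - d) / (K * d)"
    using assms by (simp add: pos_le_divide_eq pos_divide_le_eq mult.commute)
  moreover have "f / p = 1 - (p - f) / p"
    using assms by (simp add: diff_divide_distrib)
  ultimately show ?thesis by simp
qed

lemma ratio_ge_of_half_bound: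
  fixes d p f K :: real
  assumes "0 < d" "d \<le> p" "0 < K" "K * (p - f) \<le> 1"
  shows "1 - 1 / (K * d) \<le> f / p"
proof -
  have "K * d * (p - f) \<le> d"
    using assms(1,4) mult_left_mono[of "K * (p - f)" 1 d] by (simp add: algebra_simps)
  also have "\<dots> \<le> p"
    using assms(2) .
  finally have "(p - f) / p \<le> 1 / (K * d)"
    using assms by (simp add: pos_le_divide_eq pos_divide_le_eq mult.commute)
  moreover have "f / p = 1 - (p - f) / p"
    using assms by (simp add: diff_divide_distrib)
  ultimately show ?thesis by simp
qed

lemma ratio_eq_of_gap:
  fixes d f K c :: real
  assumes "0 < d" "K \<noteq> 0" "K * (d - f) = c"
  shows "f / d = 1 - c / (K * d)"
proof -
  have "c / (K * d) = (d - f) / d"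
    unfolding assms(3)[symmetric] using assms(2) by simp
  then show ?thesis
    using assms(1) by (simp add: diff_divide_distrib)
qed

lemma F_min_ge:
  assumes "density_op (Suc N) rho0" "perm_invariant (Suc N) rho0" "d \<le> p_rho N Om rho0"
    and "\<And>rho. density_op (Suc N) rho \<Longrightarrow> perm_invariant (Suc N) rho \<Longrightarrow> d \<le> p_rho N Om rho \<Longrightarrow>
      B \<le> f_rho N Om psi rho / p_rho N Om rho"
  shows "B \<le> F_min N d Om psi"
  unfolding F_min_def using assms by (intro cInf_greatest) auto

lemma F_min_eq:
  assumes "density_op (Suc N) rho0" "perm_invariant (Suc N) rho0" "d \<le> p_rho N Om rho0"
    and "f_rho N Om psi rho0 / p_rho N Om rho0 = B"
    and "\<And>rho. density_op (Suc N) rho \<Longrightarrow> perm_invariant (Suc N) rho \<Longrightarrow> d \<le> p_rho N Om rho \<Longrightarrow>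
      B \<le> f_rho N Om psi rho / p_rho N Om rho"
  shows "F_min N d Om psi = B"
proof (rule antisym)
  show "F_min N d Om psi \<le> B"
    unfolding F_min_def using assms by (intro cInf_lower2[of B]) (auto simp: bdd_below_def)
  show "B \<le> F_min N d Om psi"
    using assms by (intro F_min_ge) auto
qed

context
  fixes Om :: "'a::finite op" and psi :: "'a \<Rightarrow> complex" and beta :: real and N :: nat and delta :: real
  assumes psi: "cinner psi psi = 1" and vo: "verification_op Om psi"
    and beta: "second_largest_eigenvalue Om beta" and beta_lt_1: "beta < 1"
    and N: "1 \<le> N" and delta: "0 < delta" "delta \<le> 1"
begin

lemma product_state:
  "density_op (Suc N) (sym_excitation psi psi (Suc N))" "perm_invariant (Suc N) (sym_excitation psi psi (Suc N))"
  "p_rho N Om (sym_excitation psi psi (Suc N)) = 1" "f_rho N Om psi (sym_excitation psi psi (Suc N)) = 1"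
proof -
  have fix_psi: "mat_vec Om psi = psi" "mat_vec Om psi = (\<lambda>a. of_real 1 * psi a)"
    using vo unfolding verification_op_def by simp_all
  show "density_op (Suc N) (sym_excitation psi psi (Suc N))"
    by (rule sym_excitation_density[OF psi psi]) simp
  show "perm_invariant (Suc N) (sym_excitation psi psi (Suc N))"
    by (rule sym_excitation_perm_invariant)
  show "p_rho N Om (sym_excitation psi psi (Suc N)) = 1"
    using sym_excitation_acceptance(1)[OF psi fix_psi(1) psi fix_psi(2)] by simp
  show "f_rho N Om psi (sym_excitation psi psi (Suc N)) = 1"
    using sym_excitation_acceptance(2)[OF psi fix_psi(1) psi fix_psi(2)] psi by simp
qed

lemma excitation_state:
  assumes "is_eigenvalue Om (complex_of_real m)" "m \<noteq> 1"
  obtains rho where "density_op (Suc N) rho" "perm_invariant (Suc N) rho"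
    "p_rho N Om rho = (real N * m + 1) / (real N + 1)"
    "p_rho N Om rho - f_rho N Om psi rho = 1 / (real N + 1)"
proof -
  have psd: "psd_on UNIV Om" and fix_psi: "mat_vec Om psi = psi"
    using vo unfolding verification_op_def by auto
  obtain v where v: "cinner v v = 1" "cinner psi v = 0" "mat_vec Om v = (\<lambda>a. of_real m * v a)"
    using eigenvector_orthogonal_to_fixed[OF psd_on_UNIV_hermitian[OF psd] fix_psi assms] .
  note acc = sym_excitation_acceptance[OF psi fix_psi v(1,3), of N]
  show ?thesis
  proof (rule that)
    show "density_op (Suc N) (sym_excitation psi v (Suc N))"
      by (rule sym_excitation_density[OF psi v(1)]) simp
    show "perm_invariant (Suc N) (sym_excitation psi v (Suc N))"
      by (rule sym_excitation_perm_invariant)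
    show "p_rho N Om (sym_excitation psi v (Suc N)) = (real N * m + 1) / (real N + 1)"
      by (rule acc(1))
    show "p_rho N Om (sym_excitation psi v (Suc N)) - f_rho N Om psi (sym_excitation psi v (Suc N)) =
        1 / (real N + 1)"
      unfolding acc v(2) by (simp add: diff_divide_distrib[symmetric])
  qed
qed

lemma admissible_ratio_ge_gap_bound:
  assumes "density_op (Suc N) rho" "perm_invariant (Suc N) rho" "delta \<le> p_rho N Om rho"
  shows "1 - (1 - delta) / (real N * (1 - beta) * delta) \<le> f_rho N Om psi rho / p_rho N Om rho"
  using acceptance_gap_bound[OF psi vo beta beta_lt_1 assms(1,2)] assms(3) delta N beta_lt_1
  by (intro ratio_ge_of_gap_bound) auto

lemma admissible_ratio_ge_half_bound:
  assumes "beta \<le> 1/2" "density_op (Suc N) rho" "perm_invariant (Suc N) rho" "delta \<le> p_rho N Om rho"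
  shows "1 - 1 / ((real N + 1) * delta) \<le> f_rho N Om psi rho / p_rho N Om rho"
  using acceptance_half_bound[OF psi vo beta beta_lt_1 assms(2,3,1)] assms(4) delta
  by (intro ratio_ge_of_half_bound) auto

lemma F_min_ge_gap_bound: "1 - (1 - delta) / (real N * (1 - beta) * delta) \<le> F_min N delta Om psi"
  using product_state(3) delta by (intro F_min_ge[OF product_state(1,2)] admissible_ratio_ge_gap_bound) auto

lemma F_min_ge_half_bound: "beta \<le> 1/2 \<Longrightarrow> 1 - 1 / ((real N + 1) * delta) \<le> F_min N delta Om psi"
  using product_state(3) delta by (intro F_min_ge[OF product_state(1,2)] admissible_ratio_ge_half_bound) auto

text \<open>The bound is attained on the segment from the product state \<open>psi^(N+1)\<close>, where \<open>p = 1\<close>,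
  to the symmetric excitation by a \<open>beta\<close>-eigenvector, where \<open>p = (1 + N beta) / (N + 1)\<close>; both
  satisfy \<open>N (1 - beta) (p - f) + p = 1\<close>.\<close>

lemma F_min_eq_gap_bound:
  assumes "(1 + real N * beta) / (real N + 1) \<le> delta"
  shows "F_min N delta Om psi = 1 - (1 - delta) / (real N * (1 - beta) * delta)"
proof -
  obtain rb where rb: "density_op (Suc N) rb" "perm_invariant (Suc N) rb"
    "p_rho N Om rb = (real N * beta + 1) / (real N + 1)" "p_rho N Om rb - f_rho N Om psi rb = 1 / (real N + 1)"
    using beta beta_lt_1 excitation_state unfolding second_largest_eigenvalue_def by blast
  have "real N * (1 - beta) * (p_rho N Om rb - f_rho N Om psi rb) + 1 * p_rho N Om rb =
      (real N * (1 - beta) + (real N * beta + 1)) / (real N + 1)"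
    unfolding rb(4) unfolding rb(3) by (simp add: add_divide_distrib)
  also have "\<dots> = 1"
    by (simp add: algebra_simps)
  finally have rb_line: "real N * (1 - beta) * (p_rho N Om rb - f_rho N Om psi rb) + 1 * p_rho N Om rb = 1" .
  obtain rho where rho: "density_op (Suc N) rho" "perm_invariant (Suc N) rho" "p_rho N Om rho = delta"
    "real N * (1 - beta) * (p_rho N Om rho - f_rho N Om psi rho) + 1 * p_rho N Om rho = 1"
    using mix_op_attains[OF product_state(1,2) rb(1,2) _ _ _ rb_line] product_state(3,4) rb(3) assms delta
    by (auto simp: add.commute)
  show ?thesis
  proof (rule F_min_eq[OF rho(1,2)])
    have "real N * (1 - beta) * (delta - f_rho N Om psi rho) = 1 - delta"
      using rho(3,4) by simp
    then show "f_rho N Om psi rho / p_rho N Om rho = 1 - (1 - delta) / (real N * (1 - beta) * delta)"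
      unfolding rho(3) using delta N beta_lt_1 by (intro ratio_eq_of_gap) auto
  qed (use rho(3) admissible_ratio_ge_gap_bound in auto)
qed

text \<open>Here the segment runs between the symmetric excitations by eigenvectors for \<open>beta\<close> and for
  \<open>0\<close>, along which \<open>p - f = 1 / (N + 1)\<close>.\<close>

lemma F_min_eq_half_bound:
  assumes "beta \<le> 1/2" "is_eigenvalue Om 0"
    and "1 / (real N + 1) \<le> delta" "delta \<le> (1 + real N * beta) / (real N + 1)"
  shows "F_min N delta Om psi = 1 - 1 / ((real N + 1) * delta)"
proof -
  obtain rb where rb: "density_op (Suc N) rb" "perm_invariant (Suc N) rb"
    "p_rho N Om rb = (real N * beta + 1) / (real N + 1)" "p_rho N Om rb - f_rho N Om psi rb = 1 / (real N + 1)"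
    using beta beta_lt_1 excitation_state unfolding second_largest_eigenvalue_def by blast
  obtain rz where rz: "density_op (Suc N) rz" "perm_invariant (Suc N) rz"
    "p_rho N Om rz = 1 / (real N + 1)" "p_rho N Om rz - f_rho N Om psi rz = 1 / (real N + 1)"
    using excitation_state[of 0] assms(2) by auto
  have line: "(real N + 1) * (p_rho N Om r - f_rho N Om psi r) + 0 * p_rho N Om r = 1"
    if "p_rho N Om r - f_rho N Om psi r = 1 / (real N + 1)" for r
    unfolding that by simp
  obtain rho where rho: "density_op (Suc N) rho" "perm_invariant (Suc N) rho" "p_rho N Om rho = delta"
    "(real N + 1) * (p_rho N Om rho - f_rho N Om psi rho) + 0 * p_rho N Om rho = 1"
    using mix_op_attains[OF rb(1,2) rz(1,2) _ _ line[OF rb(4)] line[OF rz(4)]] rb(3) rz(3) assms(3,4)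
    by (auto simp: add.commute)
  show ?thesis
  proof (rule F_min_eq[OF rho(1,2)])
    have "(real N + 1) * (delta - f_rho N Om psi rho) = 1"
      using rho(3,4) by simp
    then show "f_rho N Om psi rho / p_rho N Om rho = 1 - 1 / ((real N + 1) * delta)"
      unfolding rho(3) using delta by (intro ratio_eq_of_gap) auto
  qed (use rho(3) admissible_ratio_ge_half_bound[OF assms(1)] in auto)
qed

end

theorem theorem5:
  fixes Om :: "'a::finite op" and psi :: "'a \<Rightarrow> complex"
    and beta :: real and N :: nat and delta :: real
  assumes "CARD('a) \<ge> 2"
    and "unit_vec psi"
    and "verification_op Om psi"
    and "second_largest_eigenvalue Om beta"
    and "N \<ge> 1"
    and "0 < delta" and "delta \<le> 1"
    and "0 < 1 - beta" and "1 - beta \<le> 1"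
  shows "F_min N delta Om psi \<ge> 1 - (1 - delta) / (real N * (1 - beta) * delta)
    \<and> ((1 + real N * beta) / (real N + 1) \<le> delta \<longrightarrow>
         F_min N delta Om psi = 1 - (1 - delta) / (real N * (1 - beta) * delta))
    \<and> (1 - beta \<ge> 1/2 \<longrightarrow>
         F_min N delta Om psi \<ge> 1 - 1 / ((real N + 1) * delta)
         \<and> (is_eigenvalue Om 0 \<and> 1 / (real N + 1) \<le> delta
              \<and> delta \<le> (1 + real N * beta) / (real N + 1) \<longrightarrow>
              F_min N delta Om psi = 1 - 1 / ((real N + 1) * delta)))"
proof -
  have psi: "cinner psi psi = 1"
    using assms(2) unfolding unit_vec_cinner .
  have beta_lt_1: "beta < 1"
    using assms(8) by simp
  note bounds = F_min_ge_gap_bound F_min_eq_gap_bound F_min_ge_half_bound F_min_eq_half_bound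
  note instances = bounds[OF psi assms(3,4) beta_lt_1 assms(5,6,7)]
  show ?thesis
    using instances by auto
qed

end
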